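(* Suppose $n\ge r_0$. Then with probability at least $1-\delta$ over the training features $S$, for every $r>0$, $$\mathfrak R\Big(\big\{f-f^*: f\in\mathcal F(B_h,w,S,r_0),\ \mathbb E_P[(f-f^* )^2]\le r\big\}\Big)\le\sqrt{\log(2/\delta)}\cdot\Theta\Big(\frac{d^{k_0}}{n}\Big)+\sqrt{\frac{r\,r_0}{n}}+2w.$$
   Context: $\mathcal X=S^{d-1}$, uniform probability measure $P=\mu$; $k_0\ge1$ constant, $d$ at least a large constant. $S=\{\vec x_i\}_{i=1}^n$ i.i.d. from $P$ (distinct). $K=K^{(0)}+K^{(1)}$, $K^{(0)}(u,v)=\frac{\pi-\arccos(u^\top v)}{2\pi}$, $K^{(1)}(u,v)=u^\top vK^{(0)}(u,v)$; RKHS $\mathcal H_K$, $\mathcal H_K(B)=\{h:\|h\|_{\mathcal H_K}\le B\}$. $\mathcal H_\ell$ = degree-$\ell$ spherical harmonics (dim $N(d,\ell)$, basis $Y_{\ell j}$), eigenspace of $T_K$ with eigenvalue $\mu_\ell$; $m_\ell=\sum_{\ell'\le\ell}N(d,\ell')$, $r_0=m_{k_0}$. Target $f^*=\sum_{\ell\le k_0,j}a_{\ell j}Y_{\ell j}$ with $\sum a_{\ell j}^2/\mu_\ell\le\gamma_0^2$. $\mathbf K_n=[K(\vec x_i,\vec x_j)/n]=\mathbf U\Sigma\mathbf U^\top$ (eigenvalues non-increasing), $\mathbf U^{(r_0)}$ the first $r_0$ columns; $\mathcal H_{S,r_0}=\{\sum_iK(\cdot,\vec x_i)\alpha_i:\alpha\in\mathrm{Span}(\mathbf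 U^{(r_0)})\}$. $B_h=\gamma_0+\Theta(1)$ is a constant, $w>0$, and $\mathcal F(B_h,w,S,r_0)=\{h+e:h\in\mathcal H_K(B_h)\cap\mathcal H_{S,r_0},\ \|e\|_\infty\le w\}$ (with $S$ held fixed). Rademacher complexity of a fixed class $\mathcal F$: $\mathfrak R(\mathcal F)=\mathbb E\big[\sup_{f\in\mathcal F}\frac1n\sum_{i=1}^n\sigma_if(\vec x'_i)\big]$, expectation over i.i.d. $\vec x'_i\sim P$ and independent Rademacher signs $\sigma_i$. $\Theta$ hides constants independent of $n,d,\delta,r$. *)

theory Defs
  imports "HOL-Probability.Probability" "HOL-Library.Function_Algebras"
begin

text \<open>Points of R^d are represented as extensional functions nat => real on {..<d}.\<close>

definition ip :: "nat \<Rightarrow> (nat \<Rightarrow> real) \<Rightarrow> (nat \<Rightarrow> real) \<Rightarrow> real" where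
  "ip d u v = (\<Sum>i<d. u i * v i)"

definition sph :: "nat \<Rightarrow> (nat \<Rightarrow> real) set" where
  "sph d = {x \<in> {..<d} \<rightarrow>\<^sub>E UNIV. (\<Sum>i<d. (x i)^2) = 1}"

definition lebesgue_d :: "nat \<Rightarrow> (nat \<Rightarrow> real) measure" where
  "lebesgue_d d = PiM {..<d} (\<lambda>_. lborel)"

definition cone :: "nat \<Rightarrow> (nat \<Rightarrow> real) set \<Rightarrow> (nat \<Rightarrow> real) set" where
  "cone d A = {restrict (\<lambda>i. t * x i) {..<d} | t x. 0 < t \<and> t \<le> 1 \<and> x \<in> A}"

text \<open>Uniform probability measure on the unit sphere S^{d-1} (normalized surface / cone measure).\<close>
definition unif_sphere :: "nat \<Rightarrow> (nat \<Rightarrow> real) measure" where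
  "unif_sphere d = measure_of (sph d) {A \<in> sets (lebesgue_d d). A \<subseteq> sph d}
     (\<lambda>A. emeasure (lebesgue_d d) (cone d A) / emeasure (lebesgue_d d) (cone d (sph d)))"

definition K0 :: "nat \<Rightarrow> (nat \<Rightarrow> real) \<Rightarrow> (nat \<Rightarrow> real) \<Rightarrow> real" where
  "K0 d u v = (pi - arccos (ip d u v)) / (2 * pi)"

definition K1 :: "nat \<Rightarrow> (nat \<Rightarrow> real) \<Rightarrow> (nat \<Rightarrow> real) \<Rightarrow> real" where
  "K1 d u v = ip d u v * K0 d u v"

definition Kker :: "nat \<Rightarrow> (nat \<Rightarrow> real) \<Rightarrow> (nat \<Rightarrow> real) \<Rightarrow> real" where
  "Kker d u v = K0 d u v + K1 d u v"

definition TK :: "nat \<Rightarrow> ((nat \<Rightarrow> real) \<Rightarrow> real) \<Rightarrow> (nat \<Rightarrow> real) \<Rightarrow> real" where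
  "TK d f x = (\<integral>y. Kker d x y * f y \<partial>unif_sphere d)"

definition mi :: "nat \<Rightarrow> nat \<Rightarrow> (nat \<Rightarrow> nat) set" where
  "mi d l = {m. (\<forall>i\<ge>d. m i = 0) \<and> (\<Sum>i<d. m i) = l}"

text \<open>Coefficients c of a homogeneous polynomial of degree l whose (formal) Laplacian vanishes:
  the coefficient of x^m' in the Laplacian is sum_i (m'_i+2)(m'_i+1) c(m'+2e_i).\<close>
definition harm_coeffs :: "nat \<Rightarrow> nat \<Rightarrow> ((nat \<Rightarrow> nat) \<Rightarrow> real) \<Rightarrow> bool" where
  "harm_coeffs d l c \<longleftrightarrow> (\<forall>m. m \<notin> mi d l \<longrightarrow> c m = 0) \<and>
     (\<forall>m'. (\<forall>i\<ge>d. m' i = 0) \<longrightarrow>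
        (\<Sum>i<d. real ((m' i + 2) * (m' i + 1)) * c (m'(i := m' i + 2))) = 0)"

text \<open>H_l: degree-l spherical harmonics (restrictions to the sphere of homogeneous harmonic
  polynomials of degree l; set to 0 off the sphere).\<close>
definition SH :: "nat \<Rightarrow> nat \<Rightarrow> ((nat \<Rightarrow> real) \<Rightarrow> real) set" where
  "SH d l = {f. \<exists>c. harm_coeffs d l c \<and>
      f = (\<lambda>x. if x \<in> sph d then (\<Sum>m\<in>mi d l. c m * (\<Prod>i<d. x i ^ m i)) else 0)}"

definition Ndim :: "nat \<Rightarrow> nat \<Rightarrow> nat" where
  "Ndim d l = vector_space.dim (\<lambda>a (f :: (nat \<Rightarrow> real) \<Rightarrow> real) x. a * f x) (SH d l)"

definition mu :: "nat \<Rightarrow> nat \<Rightarrow> real" where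
  "mu d l = (THE c. \<forall>Y\<in>SH d l. \<forall>x\<in>sph d. TK d Y x = c * Y x)"

definition m_sum :: "nat \<Rightarrow> nat \<Rightarrow> nat" where
  "m_sum d l = (\<Sum>l'\<le>l. Ndim d l')"

text \<open>f* = sum_{l<=k0} g_l with g_l in H_l (g_l = sum_j a_{lj} Y_{lj}, with {Y_{lj}}_j orthonormal
  in L^2(P), so sum_j a_{lj}^2 = ||g_l||^2_{L^2(P)}) and sum a_{lj}^2/mu_l <= gamma0^2.\<close>
definition target :: "nat \<Rightarrow> nat \<Rightarrow> real \<Rightarrow> ((nat \<Rightarrow> real) \<Rightarrow> real) \<Rightarrow> bool" where
  "target d k0 \<gamma>0 fs \<longleftrightarrow> (\<exists>g :: nat \<Rightarrow> (nat \<Rightarrow> real) \<Rightarrow> real.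
      (\<forall>l\<le>k0. g l \<in> SH d l) \<and> (\<forall>x\<in>sph d. fs x = (\<Sum>l\<le>k0. g l x)) \<and>
      (\<Sum>l\<le>k0. (\<integral>x. (g l x)^2 \<partial>unif_sphere d) / mu d l) \<le> \<gamma>0^2)"

definition gram :: "nat \<Rightarrow> nat \<Rightarrow> (nat \<Rightarrow> nat \<Rightarrow> real) \<Rightarrow> nat \<Rightarrow> nat \<Rightarrow> real" where
  "gram d n S i j = Kker d (S i) (S j) / real n"

definition eigdec :: "nat \<Rightarrow> (nat \<Rightarrow> nat \<Rightarrow> real) \<Rightarrow> (nat \<Rightarrow> nat \<Rightarrow> real) \<Rightarrow> (nat \<Rightarrow> real) \<Rightarrow> bool" where
  "eigdec n G U \<sigma> \<longleftrightarrow>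
     (\<forall>k<n. \<forall>l<n. (\<Sum>i<n. U i k * U i l) = (if k = l then 1 else 0)) \<and>
     (\<forall>k<n. \<forall>i<n. (\<Sum>j<n. G i j * U j k) = \<sigma> k * U i k) \<and>
     (\<forall>k l. k \<le> l \<longrightarrow> l < n \<longrightarrow> \<sigma> l \<le> \<sigma> k)"

text \<open>F(B_h, w, S, r0) = {h + e : h in H_K(B_h) \<inter> H_{S,r0}, ||e||_inf <= w}.
  h = sum_i K(.,x_i) alpha_i with alpha in Span(U^(r0)); its RKHS norm squared is
  sum_{i,j} alpha_i alpha_j K(x_i,x_j).\<close>
definition Fcls :: "nat \<Rightarrow> nat \<Rightarrow> (nat \<Rightarrow> nat \<Rightarrow> real) \<Rightarrow> (nat \<Rightarrow> nat \<Rightarrow> real) \<Rightarrow> nat \<Rightarrow> real \<Rightarrow> real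
    \<Rightarrow> ((nat \<Rightarrow> real) \<Rightarrow> real) set" where
  "Fcls d n S U r0 Bh w = {(\<lambda>x. (\<Sum>i<n. Kker d x (S i) * \<alpha> i) + e x) | \<alpha> e.
      (\<exists>c. \<forall>i<n. \<alpha> i = (\<Sum>k<r0. c k * U i k)) \<and>
      (\<Sum>i<n. \<Sum>j<n. \<alpha> i * \<alpha> j * Kker d (S i) (S j)) \<le> Bh^2 \<and>
      e \<in> borel_measurable (unif_sphere d) \<and> (\<forall>x\<in>sph d. \<bar>e x\<bar> \<le> w)}"

definition rademacher_signs :: "real measure" where
  "rademacher_signs = measure_pmf (pmf_of_set {-1, 1})"

text \<open>Empirical supremum (the supremum over the empty class is taken to be 0).\<close>
definition rad_sup :: "nat \<Rightarrow> ('a \<Rightarrow> real) set \<Rightarrow> (nat \<Rightarrow> 'a) \<times> (nat \<Rightarrow> real) \<Rightarrow> real" where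
  "rad_sup n F z = (if F = {} then 0 else Sup ((\<lambda>f. (\<Sum>i<n. snd z i * f (fst z i)) / real n) ` F))"

definition rad_measure :: "'a measure \<Rightarrow> nat \<Rightarrow> ((nat \<Rightarrow> 'a) \<times> (nat \<Rightarrow> real)) measure" where
  "rad_measure P n = PiM {..<n} (\<lambda>_. P) \<Otimes>\<^sub>M PiM {..<n} (\<lambda>_. rademacher_signs)"

definition rademacher :: "'a measure \<Rightarrow> nat \<Rightarrow> ('a \<Rightarrow> real) set \<Rightarrow> real" where
  "rademacher P n F = (\<integral>z. rad_sup n F z \<partial>rad_measure P n)"

definition loc_class :: "nat \<Rightarrow> nat \<Rightarrow> (nat \<Rightarrow> nat \<Rightarrow> real) \<Rightarrow> (nat \<Rightarrow> nat \<Rightarrow> real) \<Rightarrow> nat \<Rightarrow> real \<Rightarrow> real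
    \<Rightarrow> ((nat \<Rightarrow> real) \<Rightarrow> real) \<Rightarrow> real \<Rightarrow> ((nat \<Rightarrow> real) \<Rightarrow> real) set" where
  "loc_class d n S U r0 Bh w fs r = {(\<lambda>x. f x - fs x) | f. f \<in> Fcls d n S U r0 Bh w \<and>
      (\<integral>x. (f x - fs x)^2 \<partial>unif_sphere d) \<le> r}"

end

theory Submission
  imports Defs
begin

text \<open>
  The bound holds for every sample \<open>S\<close>.  Every \<open>h \<in> H\<^sub>S\<^sub>,\<^sub>r\<^sub>0\<close> is a combination of the \<open>r0\<close> functions
  \<open>\<psi>\<^sub>k = \<Sum>\<^sub>i K(\<cdot>, x\<^sub>i) U\<^sub>i\<^sub>k\<close>.  Choose an \<open>L\<^sup>2(P)\<close>-orthonormal basis \<open>\<phi>\<^sub>1, \<dots>, \<phi>\<^sub>m\<close> (\<open>m \<le> r0\<close>) of their span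
  and write \<open>h - f\<^sup>* = \<Sum>\<^sub>l \<beta>\<^sub>l \<phi>\<^sub>l - \<rho>\<close> with \<open>\<rho> \<bottom> \<phi>\<^sub>l\<close>.  Projecting \<open>h + e - f\<^sup>*\<close> onto the span and using
  \<open>\<parallel>h + e - f\<^sup>*\<parallel>\<^sub>2 \<le> \<surd>r\<close>, \<open>\<bar>e\<bar> \<le> w\<close> gives \<open>|\<beta>| \<le> \<surd>r + w\<close>.  Hence the Rademacher average of \<open>h + e - f\<^sup>*\<close> is at
  most \<open>((\<surd>r + w) |Y| - \<Sum>\<^sub>i \<sigma>\<^sub>i \<rho>(x\<^sub>i)) / n + w\<close> with \<open>Y\<^sub>l = \<Sum>\<^sub>i \<sigma>\<^sub>i \<phi>\<^sub>l(x\<^sub>i)\<close>; since \<open>E |Y| \<le> \<surd>(m n)\<close> and the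
  \<open>\<rho>\<close>-term has mean zero, the complexity is at most \<open>(\<surd>r + w) \<surd>(m/n) + w \<le> \<surd>(r r0/n) + 2w\<close>.

  The supremum defining the complexity must also be shown measurable.  As \<open>P\<close> has no atoms (\<open>d \<ge> 2\<close>), the
  supremum over \<open>e\<close> is attained by changing \<open>e\<close> on the sample points only, which turns the
  supremum over the class into one over the coefficient vectors of \<open>h\<close>, of a function continuous
  in the coefficients; a countable dense set of coefficients then suffices.
\<close>

section \<open>The uniform measure on the sphere\<close>

definition vnorm :: "nat \<Rightarrow> (nat \<Rightarrow> real) \<Rightarrow> real" where
  "vnorm d y = sqrt (\<Sum>i<d. (y i)^2)"

definition vnormalize :: "nat \<Rightarrow> (nat \<Rightarrow> real) \<Rightarrow> nat \<Rightarrow> real" where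
  "vnormalize d y = (\<lambda>i\<in>{..<d}. y i / vnorm d y)"

interpretation lborel_product: product_sigma_finite "\<lambda>_::nat. lborel"
  by (simp add: product_sigma_finite_def lborel.sigma_finite_measure_axioms)

lemma space_lebesgue_d: "space (lebesgue_d d) = {..<d} \<rightarrow>\<^sub>E UNIV"
  by (simp add: lebesgue_d_def space_PiM)

lemma borel_measurable_coordinate:
  assumes "i < d"
  shows "(\<lambda>x. x i) \<in> borel_measurable (lebesgue_d d)"
proof -
  have "(\<lambda>x. x i) \<in> measurable (lebesgue_d d) lborel"
    unfolding lebesgue_d_def using assms by (intro measurable_component_singleton) auto
  then show ?thesis by simp
qed

lemma sph_in_sets: "sph d \<in> sets (lebesgue_d d)"
proof -
  have "sph d = {x \<in> space (lebesgue_d d). (\<Sum>i<d. (x i)^2) = 1}"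
    by (simp add: sph_def space_lebesgue_d)
  also have "\<dots> \<in> sets (lebesgue_d d)"
    unfolding lebesgue_d_def by measurable
  finally show ?thesis .
qed

lemma borel_measurable_vnorm [measurable]: "vnorm d \<in> borel_measurable (lebesgue_d d)"
  unfolding vnorm_def lebesgue_d_def by measurable

lemma measurable_vnormalize: "vnormalize d \<in> measurable (lebesgue_d d) (lebesgue_d d)"
  unfolding vnormalize_def lebesgue_d_def
  by (rule measurable_restrict) (use borel_measurable_vnorm[unfolded lebesgue_d_def] in measurable)

lemma abs_coordinate_le_vnorm: "i < d \<Longrightarrow> \<bar>y i\<bar> \<le> vnorm d y"
proof -
  assume "i < d"
  then have "(y i)^2 \<le> (\<Sum>j<d. (y j)^2)"
    by (intro member_le_sum) auto
  then show ?thesis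
    unfolding vnorm_def using real_sqrt_le_mono by fastforce
qed

lemma vnorm_sph: "x \<in> sph d \<Longrightarrow> vnorm d x = 1"
  by (simp add: vnorm_def sph_def)

lemma vnormalize_in_sph: "0 < vnorm d y \<Longrightarrow> vnormalize d y \<in> sph d"
proof -
  assume pos: "0 < vnorm d y"
  have sq: "(vnorm d y)^2 = (\<Sum>i<d. (y i)^2)"
    by (simp add: vnorm_def sum_nonneg)
  with pos have "(\<Sum>i<d. (y i)^2) \<noteq> 0"
    by (metis power_not_zero less_irrefl)
  with sq have "(\<Sum>i<d. (y i / vnorm d y)^2) = 1"
    by (simp add: power_divide flip: sum_divide_distrib)
  then show ?thesis by (simp add: sph_def vnormalize_def)
qed

lemma cone_eq:
  assumes "A \<subseteq> sph d"
  shows "cone d A = {y \<in> space (lebesgue_d d). 0 < vnorm d y \<and> vnorm d y \<le> 1 \<and> vnormalize d y \<in> A}"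
proof (intro set_eqI iffI)
  fix y assume "y \<in> cone d A"
  then obtain t x where y: "y = (\<lambda>i\<in>{..<d}. t * x i)" "0 < t" "t \<le> 1" "x \<in> A"
    by (auto simp: cone_def)
  have x: "x \<in> sph d" using y assms by auto
  have "(\<Sum>i<d. (y i)^2) = t^2 * (\<Sum>i<d. (x i)^2)"
    by (simp add: y(1) sum_distrib_left power_mult_distrib)
  then have vnorm_y: "vnorm d y = t"
    using x y(2) by (simp add: vnorm_def sph_def)
  have "vnormalize d y = x"
    using x y(2) unfolding vnormalize_def vnorm_y by (auto simp: y(1) sph_def PiE_def extensional_def)
  then show "y \<in> {y \<in> space (lebesgue_d d). 0 < vnorm d y \<and> vnorm d y \<le> 1 \<and> vnormalize d y \<in> A}"
    using y vnorm_y by (auto simp: space_lebesgue_d)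
next
  fix y assume "y \<in> {y \<in> space (lebesgue_d d). 0 < vnorm d y \<and> vnorm d y \<le> 1 \<and> vnormalize d y \<in> A}"
  then have y: "y \<in> {..<d} \<rightarrow>\<^sub>E UNIV" "0 < vnorm d y" "vnorm d y \<le> 1" "vnormalize d y \<in> A"
    by (auto simp: space_lebesgue_d)
  have "y = (\<lambda>i\<in>{..<d}. vnorm d y * vnormalize d y i)"
    using y(1,2) by (auto simp: vnormalize_def PiE_def extensional_def fun_eq_iff)
  then show "y \<in> cone d A"
    unfolding cone_def using y by blast
qed

lemma cone_sph_eq: "cone d (sph d) = {y \<in> space (lebesgue_d d). 0 < vnorm d y \<and> vnorm d y \<le> 1}"
  using cone_eq[of "sph d" d] vnormalize_in_sph by auto

lemma cone_in_sets:
  assumes "A \<in> sets (lebesgue_d d)" "A \<subseteq> sph d"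
  shows "cone d A \<in> sets (lebesgue_d d)"
proof -
  have "cone d A = {y \<in> space (lebesgue_d d). 0 < vnorm d y \<and> vnorm d y \<le> 1}
      \<inter> (vnormalize d -` A \<inter> space (lebesgue_d d))"
    using cone_eq[OF assms(2)] by auto
  also have "\<dots> \<in> sets (lebesgue_d d)"
    using measurable_sets[OF measurable_vnormalize assms(1)] by measurable
  finally show ?thesis .
qed

lemma cone_UN: "cone d (\<Union>i. A i) = (\<Union>i. cone d (A i))"
  unfolding cone_def by blast

lemma emeasure_cone_sph_finite: "emeasure (lebesgue_d d) (cone d (sph d)) < \<infinity>"
proof -
  have "cone d (sph d) \<subseteq> Pi\<^sub>E {..<d} (\<lambda>_. {-1..1})"
  proof
    fix y assume "y \<in> cone d (sph d)"
    then have "y \<in> {..<d} \<rightarrow>\<^sub>E UNIV" "vnorm d y \<le> 1"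
      by (auto simp: cone_sph_eq space_lebesgue_d)
    then have "\<bar>y i\<bar> \<le> 1" if "i < d" for i
      using abs_coordinate_le_vnorm[OF that, of y] by simp
    with \<open>y \<in> {..<d} \<rightarrow>\<^sub>E UNIV\<close> show "y \<in> Pi\<^sub>E {..<d} (\<lambda>_. {-1..1})"
      by (auto simp: PiE_def Pi_def abs_le_iff)
  qed
  then have "emeasure (lebesgue_d d) (cone d (sph d)) \<le> emeasure (lebesgue_d d) (Pi\<^sub>E {..<d} (\<lambda>_. {-1..1}))"
    by (intro emeasure_mono) (auto simp: lebesgue_d_def)
  also have "\<dots> = (\<Prod>i<d. emeasure lborel {-1..(1::real)})"
    unfolding lebesgue_d_def by (rule lborel_product.emeasure_PiM) auto
  also have "\<dots> = ennreal (2^d)"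
    using ennreal_power[of 2 d] by simp
  also have "\<dots> < \<infinity>"
    by simp
  finally show ?thesis .
qed

lemma emeasure_cone_sph_pos:
  assumes "d \<ge> 1"
  shows "0 < emeasure (lebesgue_d d) (cone d (sph d))"
proof -
  have "Pi\<^sub>E {..<d} (\<lambda>_. {0<..1/real d}) \<subseteq> cone d (sph d)"
  proof
    fix y assume y: "y \<in> Pi\<^sub>E {..<d} (\<lambda>_. {0<..1/real d})"
    have "(\<Sum>i<d. (y i)^2) \<le> (\<Sum>i<d. (1/real d)^2)"
      using y by (intro sum_mono power_mono) (auto simp: PiE_def Pi_def less_imp_le)
    also have "\<dots> \<le> 1"
      using assms by (simp add: power2_eq_square)
    finally have le: "(\<Sum>i<d. (y i)^2) \<le> 1" .
    have "0 < (y 0)^2"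
      using y assms by (auto simp: PiE_def Pi_def)
    also have "(y 0)^2 \<le> (\<Sum>i<d. (y i)^2)"
      using assms by (intro member_le_sum) auto
    finally show "y \<in> cone d (sph d)"
      using le y by (auto simp: cone_sph_eq vnorm_def space_lebesgue_d PiE_def Pi_def)
  qed
  have "0 < ennreal ((1/real d)^d)"
    using assms by simp
  also have "\<dots> = emeasure (lebesgue_d d) (Pi\<^sub>E {..<d} (\<lambda>_. {0<..1/real d}))"
    unfolding lebesgue_d_def by (subst lborel_product.emeasure_PiM) (auto simp: ennreal_power)
  also have "\<dots> \<le> emeasure (lebesgue_d d) (cone d (sph d))"
    using \<open>_ \<subseteq> cone d (sph d)\<close> by (intro emeasure_mono cone_in_sets sph_in_sets) auto
  finally show ?thesis .
qed

lemma sigma_algebra_sph: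
  "sigma_algebra (sph d) {A \<in> sets (lebesgue_d d). A \<subseteq> sph d}"
proof -
  let ?R = "restrict_space (lebesgue_d d) (sph d)"
  have "sets ?R = {A \<in> sets (lebesgue_d d). A \<subseteq> sph d}"
    using sets_restrict_space_iff[of "sph d" "lebesgue_d d"] sph_in_sets[of d]
    by (auto simp: Int_absorb2 sets.sets_into_space)
  moreover have "space ?R = sph d"
    using sets.sets_into_space[OF sph_in_sets[of d]] by (auto simp: space_restrict_space)
  ultimately show ?thesis
    using sets.sigma_algebra_axioms[of ?R] by simp
qed

lemma sets_unif_sphere: "sets (unif_sphere d) = {A \<in> sets (lebesgue_d d). A \<subseteq> sph d}"
  unfolding unif_sphere_def using sigma_algebra_sph by (rule sigma_algebra.sets_measure_of_eq)

lemma space_unif_sphere: "space (unif_sphere d) = sph d"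
  unfolding unif_sphere_def using sigma_algebra_sph by (rule sigma_algebra.space_measure_of_eq)

lemma sets_unif_sphere_restrict_space:
  "sets (unif_sphere d) = sets (restrict_space (lebesgue_d d) (sph d))"
  using sets_restrict_space_iff[of "sph d" "lebesgue_d d"] sph_in_sets[of d]
  by (auto simp: sets_unif_sphere Int_absorb2 sets.sets_into_space)

lemma emeasure_unif_sphere:
  assumes "A \<in> sets (unif_sphere d)"
  shows "emeasure (unif_sphere d) A =
    emeasure (lebesgue_d d) (cone d A) / emeasure (lebesgue_d d) (cone d (sph d))"
  unfolding unif_sphere_def
proof (rule emeasure_measure_of_sigma[OF sigma_algebra_sph])
  show "A \<in> {A \<in> sets (lebesgue_d d). A \<subseteq> sph d}"
    using assms by (simp add: sets_unif_sphere)
  show "positive {A \<in> sets (lebesgue_d d). A \<subseteq> sph d}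
      (\<lambda>A. emeasure (lebesgue_d d) (cone d A) / emeasure (lebesgue_d d) (cone d (sph d)))"
    by (auto simp: positive_def cone_def)
  show "countably_additive {A \<in> sets (lebesgue_d d). A \<subseteq> sph d}
      (\<lambda>A. emeasure (lebesgue_d d) (cone d A) / emeasure (lebesgue_d d) (cone d (sph d)))"
  proof (rule countably_additiveI)
    fix A :: "nat \<Rightarrow> _"
    assume A: "range A \<subseteq> {A \<in> sets (lebesgue_d d). A \<subseteq> sph d}" "disjoint_family A"
    have "range (\<lambda>i. cone d (A i)) \<subseteq> sets (lebesgue_d d)"
      using A(1) by (auto intro!: cone_in_sets)
    moreover have "disjoint_family (\<lambda>i. cone d (A i))"
      unfolding disjoint_family_on_def
    proof (intro ballI impI)
      fix i j :: nat assume "i \<noteq> j"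
      then have "A i \<inter> A j = {}"
        using A(2) by (auto simp: disjoint_family_on_def)
      moreover have "A i \<subseteq> sph d" "A j \<subseteq> sph d"
        using A(1) by auto
      ultimately show "cone d (A i) \<inter> cone d (A j) = {}"
        using cone_eq[of "A i" d] cone_eq[of "A j" d] by auto
    qed
    ultimately show "(\<Sum>i. emeasure (lebesgue_d d) (cone d (A i)) / emeasure (lebesgue_d d) (cone d (sph d))) =
      emeasure (lebesgue_d d) (cone d (\<Union> (range A))) / emeasure (lebesgue_d d) (cone d (sph d))"
      by (simp add: cone_UN suminf_emeasure)
  qed
qed

lemma prob_space_unif_sphere:
  assumes "d \<ge> 1"
  shows "prob_space (unif_sphere d)"
proof
  have "sph d \<in> sets (unif_sphere d)"
    using sph_in_sets by (simp add: sets_unif_sphere)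
  then show "emeasure (unif_sphere d) (space (unif_sphere d)) = 1"
    using emeasure_unif_sphere emeasure_cone_sph_finite[of d] emeasure_cone_sph_pos[OF assms]
    by (simp add: space_unif_sphere)
qed

lemma hyperplane_in_sets:
  assumes "a < d" "b < d"
  shows "{y \<in> space (lebesgue_d d). y a * p = y b * q} \<in> sets (lebesgue_d d)"
proof -
  note [measurable] = borel_measurable_coordinate[OF assms(1)] borel_measurable_coordinate[OF assms(2)]
  show ?thesis by measurable
qed

lemma emeasure_hyperplane:
  assumes "a < d" "b < d" "a \<noteq> b" "q \<noteq> 0"
  shows "emeasure (lebesgue_d d) {y \<in> space (lebesgue_d d). y a * p = y b * q} = 0"
    (is "emeasure _ ?T = 0")
proof -
  define I where "I = {..<d} - {b}"
  have I: "{..<d} = insert b I" "b \<notin> I" "finite I"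
    using assms by (auto simp: I_def)
  have T: "?T \<in> sets (lebesgue_d d)"
    using hyperplane_in_sets[OF assms(1,2)] .
  have line: "(\<integral>\<^sup>+ t. indicator ?T (x(b := t)) \<partial>lborel) = 0" for x :: "nat \<Rightarrow> real"
  proof -
    \<comment> \<open>on each line parallel to the \<open>b\<close>-th axis the hyperplane is a single point\<close>
    have "(\<integral>\<^sup>+ t. indicator ?T (x(b := t)) \<partial>lborel) \<le> (\<integral>\<^sup>+ t. indicator {x a * p / q} t \<partial>lborel)"
      using assms by (intro nn_integral_mono) (auto simp: indicator_def field_simps)
    then show ?thesis by simp
  qed
  have "emeasure (lebesgue_d d) ?T = (\<integral>\<^sup>+ y. indicator ?T y \<partial>lebesgue_d d)"
    using T by simp
  also have "\<dots> = (\<integral>\<^sup>+ x. (\<integral>\<^sup>+ t. indicator ?T (x(b := t)) \<partial>lborel) \<partial>(Pi\<^sub>M I (\<lambda>_. lborel)))"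
    unfolding lebesgue_d_def I(1)
    by (rule lborel_product.product_nn_integral_insert[OF I(3) I(2)])
      (use T[unfolded lebesgue_d_def I(1)] in simp)
  also have "\<dots> = 0"
    by (simp add: line)
  finally show ?thesis .
qed

lemma singleton_in_sets_unif_sphere:
  assumes "p \<in> sph d"
  shows "{p} \<in> sets (unif_sphere d)"
proof -
  have "{p} = Pi\<^sub>E {..<d} (\<lambda>i. {p i})"
  proof (intro set_eqI iffI)
    fix x assume "x \<in> Pi\<^sub>E {..<d} (\<lambda>i. {p i})"
    then have "x i = p i" for i
      using assms by (cases "i < d") (auto simp: sph_def PiE_def Pi_def extensional_def)
    then show "x \<in> {p}" by auto
  qed (use assms in \<open>auto simp: sph_def\<close>)
  also have "\<dots> \<in> sets (lebesgue_d d)"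
    unfolding lebesgue_d_def by (rule sets_PiM_I_finite) auto
  finally show ?thesis
    using assms by (simp add: sets_unif_sphere)
qed

lemma emeasure_unif_sphere_singleton:
  assumes "d \<ge> 2" "p \<in> sph d"
  shows "emeasure (unif_sphere d) {p} = 0"
proof -
  have "\<exists>a<d. p a \<noteq> 0"
  proof (rule ccontr)
    assume "\<not> (\<exists>a<d. p a \<noteq> 0)"
    then have "(\<Sum>i<d. (p i)^2) = 0" by simp
    then show False using assms(2) by (simp add: sph_def)
  qed
  then obtain a where a: "a < d" "p a \<noteq> 0" by blast
  define b where "b = (if a = 0 then 1 else (0::nat))"
  have b: "b < d" "a \<noteq> b"
    using assms a by (auto simp: b_def)
  \<comment> \<open>the ray through \<open>p\<close> lies in a hyperplane, which is a null set as \<open>d \<ge> 2\<close>\<close>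
  have "cone d {p} \<subseteq> {y \<in> space (lebesgue_d d). y a * p b = y b * p a}"
    using a b by (auto simp: cone_def space_lebesgue_d PiE_def extensional_def)
  then have "emeasure (lebesgue_d d) (cone d {p}) \<le> emeasure (lebesgue_d d) {y \<in> space (lebesgue_d d). y a * p b = y b * p a}"
    using a b by (intro emeasure_mono hyperplane_in_sets)
  also have "\<dots> = 0"
    using emeasure_hyperplane[OF a(1) b(1) b(2) a(2)] .
  finally show ?thesis
    using emeasure_unif_sphere[OF singleton_in_sets_unif_sphere[OF assms(2)]] by simp
qed

lemma borel_measurable_unif_sphereI:
  "f \<in> borel_measurable (lebesgue_d d) \<Longrightarrow> f \<in> borel_measurable (unif_sphere d)"
  unfolding measurable_cong_sets[OF sets_unif_sphere_restrict_space refl]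
  by (rule measurable_restrict_space1)

lemma diagonal_in_sets_unif_sphere:
  "{z \<in> space (unif_sphere d \<Otimes>\<^sub>M unif_sphere d). fst z = snd z} \<in> sets (unif_sphere d \<Otimes>\<^sub>M unif_sphere d)"
proof -
  let ?Q = "unif_sphere d \<Otimes>\<^sub>M unif_sphere d"
  have coordinates: "(\<lambda>z. fst z k) \<in> borel_measurable ?Q" "(\<lambda>z. snd z k) \<in> borel_measurable ?Q" if "k < d" for k
    using that
    by (auto intro!: measurable_compose[OF measurable_fst] measurable_compose[OF measurable_snd]
        borel_measurable_unif_sphereI borel_measurable_coordinate)
  have "{z \<in> space ?Q. fst z = snd z} = space ?Q \<inter> (\<Inter>k\<in>{..<d}. {z \<in> space ?Q. fst z k = snd z k})"
  proof (intro set_eqI iffI)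
    fix z assume z: "z \<in> space ?Q \<inter> (\<Inter>k\<in>{..<d}. {z \<in> space ?Q. fst z k = snd z k})"
    then have "fst z \<in> sph d" "snd z \<in> sph d"
      by (auto simp: space_pair_measure space_unif_sphere)
    then have "fst z \<in> {..<d} \<rightarrow>\<^sub>E UNIV" "snd z \<in> {..<d} \<rightarrow>\<^sub>E UNIV"
      by (auto simp: sph_def)
    moreover have "\<forall>k\<in>{..<d}. fst z k = snd z k"
      using z by auto
    ultimately have "fst z = snd z"
      by (metis PiE_ext)
    then show "z \<in> {z \<in> space ?Q. fst z = snd z}"
      using z by auto
  qed auto
  also have "\<dots> \<in> sets ?Q"
  proof (cases "d = 0")
    case False
    then show ?thesis
      by (intro sets.Int sets.top sets.finite_INT) (auto intro!: borel_measurable_eq coordinates)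
  qed simp
  finally show ?thesis .
qed

section \<open>Bounded measurable functions and orthonormal families\<close>

definition bounded_measurable :: "'a measure \<Rightarrow> ('a \<Rightarrow> real) \<Rightarrow> bool" where
  "bounded_measurable M f \<longleftrightarrow> f \<in> borel_measurable M \<and> (\<exists>B. \<forall>x\<in>space M. \<bar>f x\<bar> \<le> B)"

lemma bounded_measurable_measurable [measurable_dest]:
  "bounded_measurable M f \<Longrightarrow> f \<in> borel_measurable M"
  by (simp add: bounded_measurable_def)

lemma (in finite_measure) integrable_bounded_measurable:
  assumes "bounded_measurable M f"
  shows "integrable M f"
proof -
  obtain B where "f \<in> borel_measurable M" "\<forall>x\<in>space M. \<bar>f x\<bar> \<le> B"
    using assms by (auto simp: bounded_measurable_def)
  then show ?thesis
    by (intro integrable_const_bound[where B=B]) auto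
qed

lemma bounded_measurable_const [simp]: "bounded_measurable M (\<lambda>x. c)"
  by (auto simp: bounded_measurable_def)

lemma bounded_measurable_mult:
  assumes "bounded_measurable M f" "bounded_measurable M g"
  shows "bounded_measurable M (\<lambda>x. f x * g x)"
proof -
  obtain B C where "\<forall>x\<in>space M. \<bar>f x\<bar> \<le> B" "\<forall>x\<in>space M. \<bar>g x\<bar> \<le> C"
    using assms by (auto simp: bounded_measurable_def)
  then have "\<forall>x\<in>space M. \<bar>f x * g x\<bar> \<le> B * C"
    by (auto simp: abs_mult intro!: mult_mono)
  then show ?thesis
    using assms by (auto simp: bounded_measurable_def)
qed

lemma bounded_measurable_add:
  assumes "bounded_measurable M f" "bounded_measurable M g"
  shows "bounded_measurable M (\<lambda>x. f x + g x)"
proof -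
  obtain B C where "\<forall>x\<in>space M. \<bar>f x\<bar> \<le> B" "\<forall>x\<in>space M. \<bar>g x\<bar> \<le> C"
    using assms by (auto simp: bounded_measurable_def)
  then have "\<forall>x\<in>space M. \<bar>f x + g x\<bar> \<le> B + C"
    by (auto intro!: abs_triangle_ineq[THEN order_trans] add_mono)
  then show ?thesis
    using assms by (auto simp: bounded_measurable_def)
qed

lemma bounded_measurable_uminus: "bounded_measurable M f \<Longrightarrow> bounded_measurable M (\<lambda>x. - f x)"
  by (auto simp: bounded_measurable_def)

lemma bounded_measurable_diff:
  "bounded_measurable M f \<Longrightarrow> bounded_measurable M g \<Longrightarrow> bounded_measurable M (\<lambda>x. f x - g x)"
  using bounded_measurable_add[OF _ bounded_measurable_uminus] by simp

lemma bounded_measurable_sum: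
  "(\<And>i. i \<in> I \<Longrightarrow> bounded_measurable M (f i)) \<Longrightarrow> bounded_measurable M (\<lambda>x. \<Sum>i\<in>I. f i x)"
  by (induction I rule: infinite_finite_induct) (auto intro!: bounded_measurable_add)

lemma bounded_measurable_power2: "bounded_measurable M f \<Longrightarrow> bounded_measurable M (\<lambda>x. (f x)^2)"
  using bounded_measurable_mult[of M f f] by (simp add: power2_eq_square)

lemmas bounded_measurable_intros =
  bounded_measurable_const bounded_measurable_mult bounded_measurable_add bounded_measurable_uminus
  bounded_measurable_diff bounded_measurable_sum bounded_measurable_power2

lemma bounded_measurable_component:
  assumes "i \<in> I" "bounded_measurable M f"
  shows "bounded_measurable (PiM I (\<lambda>_. M)) (\<lambda>x. f (x i))"
proof -
  obtain B where B: "\<forall>x\<in>space M. \<bar>f x\<bar> \<le> B" and [measurable]: "f \<in> borel_measurable M"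
    using assms(2) by (auto simp: bounded_measurable_def)
  have "(\<lambda>x. f (x i)) \<in> borel_measurable (PiM I (\<lambda>_. M))"
    using assms(1) by measurable
  moreover have "\<forall>x\<in>space (PiM I (\<lambda>_. M)). \<bar>f (x i)\<bar> \<le> B"
    using B assms(1) by (auto simp: space_PiM)
  ultimately show ?thesis
    by (auto simp: bounded_measurable_def)
qed

lemma integral_mult_eq_0_if_integral_square_eq_0:
  fixes f g :: "'a \<Rightarrow> real"
  assumes [measurable]: "f \<in> borel_measurable M" "g \<in> borel_measurable M"
    and "integrable M (\<lambda>x. (f x)^2)" "(\<integral>x. (f x)^2 \<partial>M) = 0"
  shows "(\<integral>x. f x * g x \<partial>M) = 0"
proof -
  have "AE x in M. (f x)^2 = 0"
    using assms(3,4) by (subst integral_nonneg_eq_0_iff_AE[symmetric]) auto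
  then have "AE x in M. f x * g x = 0"
    by eventually_elim simp
  then show ?thesis
    using integral_cong_AE[of "\<lambda>x. f x * g x" M "\<lambda>x. 0"] by auto
qed

lemma Cauchy_Schwarz_integral:
  fixes f g :: "'a \<Rightarrow> real"
  assumes [measurable]: "f \<in> borel_measurable M" "g \<in> borel_measurable M"
    and int: "integrable M (\<lambda>x. (f x)^2)" "integrable M (\<lambda>x. (g x)^2)" "integrable M (\<lambda>x. f x * g x)"
  shows "(\<integral>x. f x * g x \<partial>M) \<le> sqrt (\<integral>x. (f x)^2 \<partial>M) * sqrt (\<integral>x. (g x)^2 \<partial>M)"
proof -
  define A where "A = (\<integral>x. (f x)^2 \<partial>M)"
  define B where "B = (\<integral>x. (g x)^2 \<partial>M)"
  have "A \<ge> 0" "B \<ge> 0"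
    unfolding A_def B_def by auto
  consider "A = 0" | "B = 0" | "A > 0" "B > 0"
    using \<open>A \<ge> 0\<close> \<open>B \<ge> 0\<close> by fastforce
  then show ?thesis
  proof cases
    case 1
    then show ?thesis
      using integral_mult_eq_0_if_integral_square_eq_0[of f M g] int by (simp add: A_def)
  next
    case 2
    then show ?thesis
      using integral_mult_eq_0_if_integral_square_eq_0[of g M f] int by (simp add: B_def mult.commute)
  next
    case 3
    define t where "t = sqrt B / sqrt A"
    have "t > 0"
      using 3 by (simp add: t_def)
    \<comment> \<open>\<open>2 f g \<le> t f\<^sup>2 + g\<^sup>2 / t\<close>, integrated and optimised in \<open>t\<close>\<close>
    have pointwise: "f x * g x \<le> (t * (f x)^2 + (g x)^2 / t) / 2" for x
    proof -
      have "0 \<le> (t * f x - g x)^2 / t"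
        using \<open>t > 0\<close> by simp
      also have "\<dots> = t * (f x)^2 + (g x)^2 / t - 2 * (f x * g x)"
        using \<open>t > 0\<close> by (simp add: power2_eq_square field_simps)
      finally show ?thesis by simp
    qed
    have "(\<integral>x. f x * g x \<partial>M) \<le> (\<integral>x. (t * (f x)^2 + (g x)^2 / t) / 2 \<partial>M)"
      using int by (intro integral_mono pointwise) auto
    also have "\<dots> = (t * A + B / t) / 2"
      using int by (simp add: A_def B_def)
    also have "\<dots> = sqrt A * sqrt B"
      using 3 unfolding t_def by (simp add: field_simps)
    finally show ?thesis
      by (simp add: A_def B_def)
  qed
qed

locale orthonormal_family = finite_measure M for M :: "'a measure" +
  fixes m :: nat and \<phi> :: "nat \<Rightarrow> 'a \<Rightarrow> real"
  assumes bounded_measurable_basis: "l < m \<Longrightarrow> bounded_measurable M (\<phi> l)"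
    and orthonormal: "l < m \<Longrightarrow> l' < m \<Longrightarrow> (\<integral>x. \<phi> l x * \<phi> l' x \<partial>M) = (if l = l' then 1 else 0)"
begin

lemma bounded_measurable_expansion: "bounded_measurable M (\<lambda>x. \<Sum>l<m. a l * \<phi> l x)"
  by (intro bounded_measurable_intros) (auto intro: bounded_measurable_basis)

lemma integral_expansion_mult_basis:
  assumes "j < m"
  shows "(\<integral>x. (\<Sum>l<m. a l * \<phi> l x) * \<phi> j x \<partial>M) = a j"
proof -
  have "(\<integral>x. (\<Sum>l<m. a l * \<phi> l x) * \<phi> j x \<partial>M) = (\<integral>x. (\<Sum>l<m. a l * (\<phi> l x * \<phi> j x)) \<partial>M)"
    by (simp add: sum_distrib_right mult.assoc)
  also have "\<dots> = (\<Sum>l<m. \<integral>x. a l * (\<phi> l x * \<phi> j x) \<partial>M)"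
    using assms by (intro Bochner_Integration.integral_sum)
      (auto intro!: integrable_bounded_measurable bounded_measurable_intros bounded_measurable_basis)
  also have "\<dots> = (\<Sum>l<m. if l = j then a l else 0)"
    using assms by (intro sum.cong) (auto simp: orthonormal)
  finally show ?thesis
    using assms by simp
qed

lemma integral_expansion_square: "(\<integral>x. (\<Sum>l<m. a l * \<phi> l x)^2 \<partial>M) = (\<Sum>l<m. (a l)^2)"
proof -
  have "(\<integral>x. (\<Sum>l<m. a l * \<phi> l x)^2 \<partial>M) = (\<integral>x. (\<Sum>l<m. a l * ((\<Sum>j<m. a j * \<phi> j x) * \<phi> l x)) \<partial>M)"
    by (simp add: power2_eq_square sum_distrib_left sum_distrib_right mult_ac)
  also have "\<dots> = (\<Sum>l<m. \<integral>x. a l * ((\<Sum>j<m. a j * \<phi> j x) * \<phi> l x) \<partial>M)"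
    by (intro Bochner_Integration.integral_sum)
      (auto intro!: integrable_bounded_measurable bounded_measurable_intros bounded_measurable_basis bounded_measurable_expansion)
  also have "\<dots> = (\<Sum>l<m. (a l)^2)"
    by (simp add: integral_expansion_mult_basis power2_eq_square)
  finally show ?thesis .
qed

lemma integral_expansion_mult_orthogonal:
  assumes "bounded_measurable M g" "\<And>l. l < m \<Longrightarrow> (\<integral>x. g x * \<phi> l x \<partial>M) = 0"
  shows "(\<integral>x. (\<Sum>l<m. a l * \<phi> l x) * g x \<partial>M) = 0"
proof -
  have "(\<integral>x. (\<Sum>l<m. a l * \<phi> l x) * g x \<partial>M) = (\<integral>x. (\<Sum>l<m. a l * (g x * \<phi> l x)) \<partial>M)"
    by (simp add: sum_distrib_left sum_distrib_right mult_ac)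
  also have "\<dots> = (\<Sum>l<m. \<integral>x. a l * (g x * \<phi> l x) \<partial>M)"
    using assms(1) by (intro Bochner_Integration.integral_sum)
      (auto intro!: integrable_bounded_measurable bounded_measurable_intros bounded_measurable_basis)
  also have "\<dots> = 0"
    by (simp add: assms(2))
  finally show ?thesis .
qed

lemma residual_orthogonal:
  assumes "bounded_measurable M f" "j < m"
  shows "(\<integral>x. (f x - (\<Sum>l<m. (\<integral>y. f y * \<phi> l y \<partial>M) * \<phi> l x)) * \<phi> j x \<partial>M) = 0"
proof -
  have "integrable M (\<lambda>x. f x * \<phi> j x)"
    using assms by (intro integrable_bounded_measurable bounded_measurable_intros bounded_measurable_basis)
  moreover have "integrable M (\<lambda>x. (\<Sum>l<m. (\<integral>y. f y * \<phi> l y \<partial>M) * \<phi> l x) * \<phi> j x)"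
    using assms
    by (intro integrable_bounded_measurable bounded_measurable_intros bounded_measurable_expansion bounded_measurable_basis)
  ultimately show ?thesis
    using assms(2) by (simp add: left_diff_distrib integral_expansion_mult_basis)
qed

lemma orthonormal_family_extend:
  assumes bm_\<rho>: "bounded_measurable M \<rho>" and \<rho>_orth: "\<And>l. l < m \<Longrightarrow> (\<integral>x. \<rho> x * \<phi> l x \<partial>M) = 0"
    and s: "s > 0" "s * s = (\<integral>x. (\<rho> x)^2 \<partial>M)"
  shows "orthonormal_family M (Suc m) (\<phi>(m := \<lambda>x. \<rho> x / s))"
proof unfold_locales
  fix l assume "l < Suc m"
  then show "bounded_measurable M ((\<phi>(m := \<lambda>x. \<rho> x / s)) l)"
    using bm_\<rho> by (auto simp: less_Suc_eq divide_inverse intro!: bounded_measurable_intros bounded_measurable_basis)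
next
  have unit: "(\<integral>x. \<rho> x / s * (\<rho> x / s) \<partial>M) = 1"
  proof -
    have "(\<integral>x. \<rho> x / s * (\<rho> x / s) \<partial>M) = (\<integral>x. (\<rho> x)^2 \<partial>M) / (s * s)"
      by (simp add: power2_eq_square)
    also have "\<dots> = 1"
      using s(1) unfolding s(2)[symmetric] by simp
    finally show ?thesis .
  qed
  have orth: "(\<integral>x. \<rho> x / s * \<phi> l x \<partial>M) = 0" "(\<integral>x. \<phi> l x * (\<rho> x / s) \<partial>M) = 0"
    if "l < m" for l
    using \<rho>_orth[OF that] by (simp_all add: mult.commute)
  fix l l' assume "l < Suc m" "l' < Suc m"
  then show "(\<integral>x. (\<phi>(m := \<lambda>x. \<rho> x / s)) l x * (\<phi>(m := \<lambda>x. \<rho> x / s)) l' x \<partial>M) =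
      (if l = l' then 1 else 0)"
    using unit orth by (auto simp: less_Suc_eq orthonormal)
qed

lemma orthonormal_extension:
  assumes f: "bounded_measurable M f"
  defines "c \<equiv> \<lambda>l. \<integral>y. f y * \<phi> l y \<partial>M"
  defines "\<rho> \<equiv> \<lambda>x. f x - (\<Sum>l<m. c l * \<phi> l x)"
  obtains (dependent) "AE x in M. f x = (\<Sum>l<m. c l * \<phi> l x)"
    | (independent) s where "s > 0" "orthonormal_family M (Suc m) (\<phi>(m := \<lambda>x. \<rho> x / s))"
proof -
  have bm_\<rho>: "bounded_measurable M \<rho>"
    unfolding \<rho>_def using f bounded_measurable_expansion by (rule bounded_measurable_diff)
  have int_\<rho>2: "integrable M (\<lambda>x. (\<rho> x)^2)"
    using bm_\<rho> by (intro integrable_bounded_measurable bounded_measurable_intros)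
  show ?thesis
  proof (cases "(\<integral>x. (\<rho> x)^2 \<partial>M) = 0")
    case True
    then have "AE x in M. (\<rho> x)^2 = 0"
      using int_\<rho>2 by (subst integral_nonneg_eq_0_iff_AE[symmetric]) auto
    then have "AE x in M. f x = (\<Sum>l<m. c l * \<phi> l x)"
      by eventually_elim (simp add: \<rho>_def)
    then show ?thesis by (rule dependent)
  next
    case False
    define s where "s = sqrt (\<integral>x. (\<rho> x)^2 \<partial>M)"
    have "(\<integral>x. (\<rho> x)^2 \<partial>M) > 0"
      using False by (simp add: order_le_neq_trans)
    then have s: "s > 0" "s * s = (\<integral>x. (\<rho> x)^2 \<partial>M)"
      unfolding s_def by auto
    have "(\<integral>x. \<rho> x * \<phi> l x \<partial>M) = 0" if "l < m" for l
      unfolding \<rho>_def c_def using residual_orthogonal[OF f that] .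
    then have "orthonormal_family M (Suc m) (\<phi>(m := \<lambda>x. \<rho> x / s))"
      by (rule orthonormal_family_extend[OF bm_\<rho> _ s])
    with s(1) show ?thesis
      by (rule independent)
  qed
qed

end

lemma (in finite_measure) gram_schmidt:
  assumes "\<And>k. k < K \<Longrightarrow> bounded_measurable M (\<psi> k)"
  shows "\<exists>m \<phi> A. m \<le> K \<and> orthonormal_family M m \<phi> \<and>
     (\<forall>k<K. AE x in M. \<psi> k x = (\<Sum>l<m. A k l * \<phi> l x))"
  using assms
proof (induction K)
  case 0
  have "orthonormal_family M 0 \<phi>" for \<phi>
    by unfold_locales auto
  then show ?case by blast
next
  case (Suc K)
  then obtain m \<phi> A where IH: "m \<le> K" "orthonormal_family M m \<phi>"
    "\<forall>k<K. AE x in M. \<psi> k x = (\<Sum>l<m. A k l * \<phi> l x)"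
    by auto
  interpret orthonormal_family M m \<phi> by (fact IH(2))
  define c where "c l = (\<integral>y. \<psi> K y * \<phi> l y \<partial>M)" for l
  have "bounded_measurable M (\<psi> K)"
    using Suc.prems by simp
  then show ?case
  proof (cases rule: orthonormal_extension)
    case dependent
    then show ?thesis
      using IH by (intro exI[of _ m] exI[of _ \<phi>] exI[of _ "A(K := c)"]) (auto simp: c_def less_Suc_eq)
  next
    case (independent s)
    define A' where "A' k l = (if k = K then (if l < m then c l else s) else (if l < m then A k l else 0))" for k l
    have "AE x in M. \<psi> k x = (\<Sum>l<Suc m. A' k l * (\<phi>(m := \<lambda>x. (\<psi> K x - (\<Sum>l<m. c l * \<phi> l x)) / s)) l x)"
      if "k < Suc K" for k
    proof (cases "k = K")
      case True
      then show ?thesis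
        using independent(1) by (simp add: A'_def)
    next
      case False
      with that IH(3) show ?thesis
        by (auto simp: A'_def less_Suc_eq elim!: eventually_mono)
    qed
    then show ?thesis
      using IH(1) independent(2) unfolding c_def by (intro exI[of _ "Suc m"] exI exI[of _ A']) auto
  qed
qed

section \<open>Products of probability spaces and Rademacher signs\<close>

lemma integral_PiM_component:
  fixes f :: "'a \<Rightarrow> real"
  assumes "prob_space M" "i \<in> I" "integrable M f"
  shows "(\<integral>x. f (x i) \<partial>PiM I (\<lambda>_. M)) = (\<integral>x. f x \<partial>M)"
proof -
  have "(\<integral>x. f x \<partial>M) = (\<integral>x. f x \<partial>distr (PiM I (\<lambda>_. M)) M (\<lambda>x. x i))"
    using distr_PiM_component[of I "\<lambda>_. M" i] assms by simp
  also have "\<dots> = (\<integral>x. f (x i) \<partial>PiM I (\<lambda>_. M))"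
    using assms by (intro integral_distr) (auto intro!: measurable_component_singleton)
  finally show ?thesis by simp
qed

lemma integral_PiM_two_components:
  fixes f g :: "'a \<Rightarrow> real"
  assumes M: "prob_space M" and I: "finite I" "i \<in> I" "j \<in> I" "i \<noteq> j"
    and fg: "integrable M f" "integrable M g"
  shows "(\<integral>x. f (x i) * g (x j) \<partial>PiM I (\<lambda>_. M)) = (\<integral>x. f x \<partial>M) * (\<integral>x. g x \<partial>M)"
proof -
  interpret product_sigma_finite "\<lambda>_. M"
    using M by (simp add: product_sigma_finite_def prob_space_imp_sigma_finite)
  interpret prob_space M by (fact M)
  define F where "F k t = (if k = i then f t else 1) * (if k = j then g t else 1)" for k t
  have "integrable M (F k)" for k
    using fg I(4) by (cases "k = i"; cases "k = j") (simp_all add: F_def[abs_def])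
  then have "(\<integral>x. (\<Prod>k\<in>I. F k (x k)) \<partial>PiM I (\<lambda>_. M)) = (\<Prod>k\<in>I. integral\<^sup>L M (F k))"
    using I(1) by (intro product_integral_prod) auto
  moreover have "(\<Prod>k\<in>I. F k (x k)) = f (x i) * g (x j)" for x
    unfolding F_def prod.distrib using I by simp
  moreover have "integral\<^sup>L M (F k) =
      (if k = i then (\<integral>x. f x \<partial>M) else 1) * (if k = j then (\<integral>x. g x \<partial>M) else 1)" for k
    using I(4) by (cases "k = i"; cases "k = j") (simp_all add: F_def[abs_def] prob_space)
  then have "(\<Prod>k\<in>I. integral\<^sup>L M (F k)) = (\<integral>x. f x \<partial>M) * (\<integral>x. g x \<partial>M)"
    using I by (simp add: prod.distrib)
  ultimately show ?thesis by simp
qed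

lemma integral_pair_measure_mult:
  fixes f :: "'a \<Rightarrow> real" and g :: "'b \<Rightarrow> real"
  assumes "sigma_finite_measure M1" "sigma_finite_measure M2" and f: "integrable M1 f" and g: "integrable M2 g"
  shows integrable_pair_measure_mult: "integrable (M1 \<Otimes>\<^sub>M M2) (\<lambda>z. f (fst z) * g (snd z))"
    and "(\<integral>z. f (fst z) * g (snd z) \<partial>(M1 \<Otimes>\<^sub>M M2)) = (\<integral>x. f x \<partial>M1) * (\<integral>y. g y \<partial>M2)"
proof -
  interpret pair_sigma_finite M1 M2
    using assms(1,2) by (simp add: pair_sigma_finite_def)
  have [measurable]: "f \<in> borel_measurable M1" "g \<in> borel_measurable M2"
    using f g by auto
  show int: "integrable (M1 \<Otimes>\<^sub>M M2) (\<lambda>z. f (fst z) * g (snd z))"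
  proof (rule Fubini_integrable)
    have "integrable M1 (\<lambda>x. \<bar>f x\<bar> * (\<integral>y. \<bar>g y\<bar> \<partial>M2))"
      using f by (intro integrable_mult_left) auto
    then show "integrable M1 (\<lambda>x. \<integral>y. norm (f (fst (x, y)) * g (snd (x, y))) \<partial>M2)"
      by (simp add: abs_mult)
    show "AE x in M1. integrable M2 (\<lambda>y. f (fst (x, y)) * g (snd (x, y)))"
      using g by (auto intro!: integrable_mult_right)
  qed measurable
  show "(\<integral>z. f (fst z) * g (snd z) \<partial>(M1 \<Otimes>\<^sub>M M2)) = (\<integral>x. f x \<partial>M1) * (\<integral>y. g y \<partial>M2)"
    using integral_fst'[OF int] by simp
qed

lemma prob_space_rademacher_signs: "prob_space rademacher_signs"
  unfolding rademacher_signs_def by (rule measure_pmf.prob_space_axioms)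

lemma borel_measurable_rademacher_signs [measurable]: "(f :: real \<Rightarrow> real) \<in> borel_measurable rademacher_signs"
  unfolding rademacher_signs_def by simp

lemma integrable_rademacher_signs [simp]: "integrable rademacher_signs (f :: real \<Rightarrow> real)"
  unfolding rademacher_signs_def by (rule integrable_measure_pmf_finite) simp

lemma integral_rademacher_signs: "(\<integral>s. f s \<partial>rademacher_signs) = (f (-1) + f 1) / (2::real)"
  unfolding rademacher_signs_def by (subst integral_pmf_of_set) auto

lemma AE_rademacher_signs: "AE s in rademacher_signs. \<bar>s\<bar> = 1"
  unfolding rademacher_signs_def by (subst AE_measure_pmf_iff) auto

lemma AE_abs_signs:
  assumes "finite I"
  shows "AE s in PiM I (\<lambda>_. rademacher_signs). \<forall>i\<in>I. \<bar>s i\<bar> = 1"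
  using assms
  by (subst AE_finite_all) (auto intro!: AE_PiM_component prob_space_rademacher_signs AE_rademacher_signs)

lemma integrable_signs_bounded:
  fixes f :: "('i \<Rightarrow> real) \<Rightarrow> real"
  assumes "finite I" "f \<in> borel_measurable (PiM I (\<lambda>_. rademacher_signs))"
    and "\<And>s. \<forall>i\<in>I. \<bar>s i\<bar> = 1 \<Longrightarrow> \<bar>f s\<bar> \<le> 1"
  shows "integrable (PiM I (\<lambda>_. rademacher_signs)) f"
proof -
  interpret prob_space "PiM I (\<lambda>_. rademacher_signs)"
    by (intro prob_space_PiM prob_space_rademacher_signs)
  show ?thesis
    using AE_abs_signs[OF assms(1)] assms(2,3)
    by (intro integrable_const_bound[where B=1]) (auto elim!: eventually_mono)
qed

lemma integral_sign:
  "i \<in> I \<Longrightarrow> (\<integral>s. s i \<partial>PiM I (\<lambda>_. rademacher_signs)) = 0"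
  using integral_PiM_component[OF prob_space_rademacher_signs, of i I "\<lambda>s. s"]
  by (simp add: integral_rademacher_signs)

lemma integral_abs_sign:
  "i \<in> I \<Longrightarrow> (\<integral>s. \<bar>s i\<bar> \<partial>PiM I (\<lambda>_. rademacher_signs)) = 1"
  using integral_PiM_component[OF prob_space_rademacher_signs, of i I "\<lambda>s. \<bar>s\<bar>"]
  by (simp add: integral_rademacher_signs)

lemma integral_sign_mult_sign:
  assumes "finite I" "i \<in> I" "j \<in> I"
  shows "(\<integral>s. s i * s j \<partial>PiM I (\<lambda>_. rademacher_signs)) = (if i = j then 1 else 0)"
proof (cases "i = j")
  case True
  then show ?thesis
    using integral_PiM_component[OF prob_space_rademacher_signs assms(2), of "\<lambda>s. s * s"]
    by (simp add: integral_rademacher_signs)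
next
  case False
  then show ?thesis
    using integral_PiM_two_components[OF prob_space_rademacher_signs assms False, of "\<lambda>s. s" "\<lambda>s. s"]
    by (simp add: integral_rademacher_signs)
qed

section \<open>Measurability of suprema\<close>

lemma Sup_real_cong_upper_bounds:
  fixes X Y :: "real set"
  assumes "\<And>u. (\<forall>x\<in>X. x \<le> u) \<longleftrightarrow> (\<forall>y\<in>Y. y \<le> u)"
  shows "Sup X = Sup Y"
  unfolding Sup_real_def using assms by simp

lemma borel_measurable_Sup_range:
  fixes F :: "nat \<Rightarrow> 'a \<Rightarrow> real"
  assumes [measurable]: "\<And>k. F k \<in> borel_measurable M"
  shows "(\<lambda>z. Sup (range (\<lambda>k. F k z))) \<in> borel_measurable M"
proof -
  \<comment> \<open>\<open>B\<close> is where the family is bounded above; elsewhere the supremum is the junk value \<open>Sup UNIV\<close>\<close>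
  define B where "B = {z \<in> space M. \<exists>N::nat. \<forall>k. F k z \<le> real N}"
  have [measurable]: "B \<in> sets M"
    unfolding B_def by measurable
  have bdd: "bdd_above (range (\<lambda>k. F k z)) \<longleftrightarrow> (\<exists>N::nat. \<forall>k. F k z \<le> real N)" for z
    by (auto simp: bdd_above_def) (meson order_trans real_arch_simple)
  define F' where "F' k z = indicator B z * F k z" for k z
  have [measurable]: "F' k \<in> borel_measurable M" for k
    unfolding F'_def by measurable
  have "(\<lambda>z. SUP k. F' k z) \<in> borel_measurable M"
    by (rule borel_measurable_cSUP)
      (simp, measurable, auto simp: F'_def B_def bdd[symmetric] bdd_above_def indicator_def)
  then have "(\<lambda>z. if z \<in> B then (SUP k. F' k z) else Sup (UNIV::real set)) \<in> borel_measurable M"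
    by measurable
  moreover have "Sup (range (\<lambda>k. F k z)) = (if z \<in> B then (SUP k. F' k z) else Sup (UNIV::real set))"
    if "z \<in> space M" for z
  proof (cases "z \<in> B")
    case False
    then have "\<not> bdd_above (range (\<lambda>k. F k z))"
      using that bdd by (auto simp: B_def)
    then have "Sup (range (\<lambda>k. F k z)) = Sup (UNIV::real set)"
      by (intro Sup_real_cong_upper_bounds) (auto simp: bdd_above_def intro: gt_ex[THEN exE])
    then show ?thesis
      using False by simp
  qed (simp add: F'_def)
  ultimately show ?thesis
    by (simp cong: measurable_cong)
qed

lemma countable_dense_subset:
  fixes S :: "'b::second_countable_topology set"
  obtains D where "D \<subseteq> S" "countable D" "S \<subseteq> closure D"
proof -
  obtain \<B> :: "'b set set" where \<B>: "countable \<B>" "\<And>C. C \<in> \<B> \<Longrightarrow> open C"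
    "\<And>T. open T \<Longrightarrow> \<exists>U. U \<subseteq> \<B> \<and> T = \<Union>U"
    using univ_second_countable by blast
  define pick where "pick b = (SOME x. x \<in> b \<inter> S)" for b
  have pick: "pick b \<in> b \<inter> S" if "b \<inter> S \<noteq> {}" for b
  proof -
    have "\<exists>x. x \<in> b \<inter> S"
      using that by blast
    then show ?thesis
      unfolding pick_def by (rule someI_ex)
  qed
  define D where "D = pick ` {b\<in>\<B>. b \<inter> S \<noteq> {}}"
  have "D \<subseteq> S"
    using pick by (auto simp: D_def)
  moreover have "countable D"
    unfolding D_def using \<B>(1) by auto
  moreover have "s \<in> closure D" if "s \<in> S" for s
    unfolding closure_iff_nhds_not_empty
  proof (intro allI impI)
    fix A T assume T: "T \<subseteq> A" "open T" "s \<in> T"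
    obtain U where "U \<subseteq> \<B>" "T = \<Union>U"
      using \<B>(3)[OF T(2)] by blast
    then obtain b where b: "b \<in> \<B>" "s \<in> b" "b \<subseteq> T"
      using T(3) by auto
    then have "pick b \<in> D \<inter> b"
      using pick[of b] that by (auto simp: D_def)
    then show "D \<inter> A \<noteq> {}"
      using b(3) T(1) by blast
  qed
  ultimately show ?thesis
    using that by blast
qed

section \<open>Rademacher averages over a sample\<close>

definition rad_avg :: "nat \<Rightarrow> (nat \<Rightarrow> 'a) \<times> (nat \<Rightarrow> real) \<Rightarrow> ('a \<Rightarrow> real) \<Rightarrow> real" where
  "rad_avg n z f = (\<Sum>i<n. snd z i * f (fst z i)) / real n"

lemma rad_sup_eq_Sup: "F \<noteq> {} \<Longrightarrow> rad_sup n F z = Sup (rad_avg n z ` F)"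
  by (simp add: rad_sup_def rad_avg_def)

locale sample_signs = prob_space P for P :: "'a measure" +
  fixes n :: nat
begin

abbreviation "samples \<equiv> PiM {..<n} (\<lambda>_. P)"
abbreviation "signs \<equiv> PiM {..<n} (\<lambda>_. rademacher_signs)"

sublocale samples: prob_space samples
  by (intro prob_space_PiM prob_space_axioms)

sublocale signs: prob_space signs
  by (intro prob_space_PiM prob_space_rademacher_signs)

lemma prob_space_rad_measure: "prob_space (rad_measure P n)"
  unfolding rad_measure_def by (intro prob_space_pair samples.prob_space_axioms signs.prob_space_axioms)

lemma measurable_sample [measurable]: "i < n \<Longrightarrow> (\<lambda>z. fst z i) \<in> measurable (rad_measure P n) P"
  unfolding rad_measure_def
  by (rule measurable_compose[OF measurable_fst measurable_component_singleton]) auto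

lemma borel_measurable_sign [measurable]: "i < n \<Longrightarrow> (\<lambda>z. snd z i) \<in> borel_measurable (rad_measure P n)"
  unfolding rad_measure_def
  by (rule measurable_compose[OF measurable_compose[OF measurable_snd measurable_component_singleton]]) auto

lemma sample_in_space: "z \<in> space (rad_measure P n) \<Longrightarrow> i < n \<Longrightarrow> fst z i \<in> space P"
  by (auto simp: rad_measure_def space_pair_measure space_PiM PiE_def Pi_def)

lemma AE_samples:
  assumes "AE x in P. Q x"
  shows "AE z in rad_measure P n. \<forall>i<n. Q (fst z i)"
proof -
  have "AE x in samples. \<forall>i\<in>{..<n}. Q (x i)"
    using assms by (subst AE_finite_all) (auto intro!: AE_PiM_component prob_space_axioms)
  then have AE: "AE x in samples. \<forall>i<n. Q (x i)"
    by eventually_elim auto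
  have eq: "distr (samples \<Otimes>\<^sub>M signs) samples fst = samples"
    by (rule prob_space.distr_pair_fst[OF signs.prob_space_axioms])
  have "AE x in distr (samples \<Otimes>\<^sub>M signs) samples fst. \<forall>i<n. Q (x i)"
    unfolding eq by (fact AE)
  then show ?thesis
    unfolding rad_measure_def by (rule AE_distrD[OF measurable_fst])
qed

lemma integral_rad_measure_mult:
  fixes F :: "(nat \<Rightarrow> 'a) \<Rightarrow> real" and S :: "(nat \<Rightarrow> real) \<Rightarrow> real"
  assumes "integrable samples F" "integrable signs S"
  shows "integrable (rad_measure P n) (\<lambda>z. F (fst z) * S (snd z))"
    "(\<integral>z. F (fst z) * S (snd z) \<partial>rad_measure P n) = (\<integral>x. F x \<partial>samples) * (\<integral>s. S s \<partial>signs)"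
  unfolding rad_measure_def
  using integral_pair_measure_mult[OF _ _ assms] samples.prob_space_axioms signs.prob_space_axioms
  by (auto simp: prob_space_imp_sigma_finite)

lemma integral_sign_mult_sample:
  assumes "i < n" "bounded_measurable P f"
  shows "integrable (rad_measure P n) (\<lambda>z. snd z i * f (fst z i))"
    "(\<integral>z. snd z i * f (fst z i) \<partial>rad_measure P n) = 0"
proof -
  have F: "integrable samples (\<lambda>x. f (x i))"
    using bounded_measurable_component[of i "{..<n}" P f] assms
    by (auto intro: samples.integrable_bounded_measurable)
  have S: "integrable signs (\<lambda>s. s i)"
    using assms(1) by (intro integrable_signs_bounded) auto
  have eq: "(\<lambda>z. snd z i * f (fst z i)) = (\<lambda>z. f (fst z i) * snd z i)"
    by (simp add: fun_eq_iff mult.commute)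
  show "integrable (rad_measure P n) (\<lambda>z. snd z i * f (fst z i))"
    unfolding eq using integral_rad_measure_mult(1)[OF F S] by simp
  show "(\<integral>z. snd z i * f (fst z i) \<partial>rad_measure P n) = 0"
    unfolding eq using integral_rad_measure_mult(2)[OF F S] integral_sign[of i "{..<n}"] assms(1) by simp
qed

lemma integrable_rad_avg:
  assumes "bounded_measurable P g"
  shows "integrable (rad_measure P n) (\<lambda>z. rad_avg n z g)"
  unfolding rad_avg_def using integral_sign_mult_sample(1)[OF _ assms]
  by (auto intro!: Bochner_Integration.integrable_sum)

lemma integral_abs_sign_rad_measure:
  assumes "i < n"
  shows "integrable (rad_measure P n) (\<lambda>z. \<bar>snd z i\<bar>)" "(\<integral>z. \<bar>snd z i\<bar> \<partial>rad_measure P n) = 1"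
proof -
  have S: "integrable signs (\<lambda>s. \<bar>s i\<bar>)"
    using assms by (intro integrable_signs_bounded) auto
  show "integrable (rad_measure P n) (\<lambda>z. \<bar>snd z i\<bar>)"
    using integral_rad_measure_mult(1)[OF samples.integrable_const[of "1::real"] S] by simp
  show "(\<integral>z. \<bar>snd z i\<bar> \<partial>rad_measure P n) = 1"
    using integral_rad_measure_mult(2)[OF samples.integrable_const[of "1::real"] S] integral_abs_sign[of i "{..<n}"] assms
    by (simp add: samples.prob_space)
qed

lemma integral_sign_pair_mult_samples:
  assumes "i < n" "j < n" "bounded_measurable P f" "bounded_measurable P g"
  shows "integrable (rad_measure P n) (\<lambda>z. (snd z i * snd z j) * (f (fst z i) * g (fst z j)))"
    "(\<integral>z. (snd z i * snd z j) * (f (fst z i) * g (fst z j)) \<partial>rad_measure P n) =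
      (if i = j then (\<integral>x. f x * g x \<partial>P) else 0)"
proof -
  have F: "integrable samples (\<lambda>x. f (x i) * g (x j))"
    using assms bounded_measurable_component[of _ "{..<n}" P]
    by (auto intro!: samples.integrable_bounded_measurable bounded_measurable_mult)
  have S: "integrable signs (\<lambda>s. s i * s j)"
    using assms by (intro integrable_signs_bounded) (auto simp: abs_mult)
  have eq: "(\<lambda>z. (snd z i * snd z j) * (f (fst z i) * g (fst z j))) =
      (\<lambda>z. (\<lambda>x. f (x i) * g (x j)) (fst z) * (\<lambda>s. s i * s j) (snd z))"
    by (simp add: fun_eq_iff mult.commute)
  show "integrable (rad_measure P n) (\<lambda>z. (snd z i * snd z j) * (f (fst z i) * g (fst z j)))"
    unfolding eq by (rule integral_rad_measure_mult(1)[OF F S])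
  have "integrable P (\<lambda>x. f x * g x)"
    using assms by (intro integrable_bounded_measurable bounded_measurable_mult)
  then show "(\<integral>z. (snd z i * snd z j) * (f (fst z i) * g (fst z j)) \<partial>rad_measure P n) =
      (if i = j then (\<integral>x. f x * g x \<partial>P) else 0)"
    unfolding eq integral_rad_measure_mult(2)[OF F S]
    using integral_sign_mult_sign[of "{..<n}" i j] integral_PiM_component[OF prob_space_axioms, of i "{..<n}"] assms
    by auto
qed

end

section \<open>A finite-rank class with a bounded perturbation\<close>

lemma finite_modification:
  fixes e v :: "'a \<Rightarrow> real"
  assumes X: "finite X" "\<And>x. x \<in> X \<Longrightarrow> {x} \<in> null_sets P" and [measurable]: "e \<in> borel_measurable P"
  obtains e' where "e' \<in> borel_measurable P" "\<And>x. x \<in> X \<Longrightarrow> e' x = v x"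
    "\<And>x. x \<notin> X \<Longrightarrow> e' x = e x" "AE x in P. e' x = e x"
proof
  define e' where "e' x = e x + (\<Sum>p\<in>X. indicator {p} x * (v p - e p))" for x
  show "e' x = v x" if "x \<in> X" for x
  proof -
    have "(\<Sum>p\<in>X. indicator {p} x * (v p - e p)) = (\<Sum>p\<in>X. if p = x then v p - e p else 0)"
      by (intro sum.cong) (auto simp: indicator_def)
    then show ?thesis
      using X that by (simp add: e'_def)
  qed
  show off_X: "e' x = e x" if "x \<notin> X" for x
    using that by (auto simp: e'_def indicator_def intro!: sum.neutral)
  show "e' \<in> borel_measurable P"
    unfolding e'_def using X
    by (intro borel_measurable_add borel_measurable_sum borel_measurable_times borel_measurable_indicator) auto
  have "AE x in P. \<forall>p\<in>X. x \<noteq> p"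
    using X by (subst AE_finite_all[OF X(1)]) (auto intro!: AE_I'[of "{_}"])
  then show "AE x in P. e' x = e x"
    by eventually_elim (auto intro: off_X)
qed

definition excess_class ::
    "'a measure \<Rightarrow> ('a \<Rightarrow> real) \<Rightarrow> ('a \<Rightarrow> real) set \<Rightarrow> real \<Rightarrow> real \<Rightarrow> ('a \<Rightarrow> real) set" where
  "excess_class P fs H w r = {(\<lambda>x. h x + e x - fs x) | h e. h \<in> H \<and> e \<in> borel_measurable P \<and>
     (\<forall>x\<in>space P. \<bar>e x\<bar> \<le> w) \<and> (\<integral>x. (h x + e x - fs x)^2 \<partial>P) \<le> r}"

locale finite_rank_class = sample_signs +
  fixes r0 :: nat and \<psi> :: "nat \<Rightarrow> 'a \<Rightarrow> real" and fs :: "'a \<Rightarrow> real"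
    and H :: "('a \<Rightarrow> real) set" and w r :: real
  assumes singleton_null: "x \<in> space P \<Longrightarrow> {x} \<in> null_sets P"
    and diagonal_in_sets: "{z \<in> space (P \<Otimes>\<^sub>M P). fst z = snd z} \<in> sets (P \<Otimes>\<^sub>M P)"
    and bounded_measurable_\<psi>: "k < r0 \<Longrightarrow> bounded_measurable P (\<psi> k)"
    and bounded_measurable_fs: "bounded_measurable P fs"
    and H_subset_span: "h \<in> H \<Longrightarrow> \<exists>c. h = (\<lambda>x. \<Sum>k<r0. c k * \<psi> k x)"
    and w_nonneg: "0 \<le> w" and r_nonneg: "0 \<le> r" and r0_le_n: "r0 \<le> n" and n_pos: "0 < n"
begin

abbreviation "G \<equiv> excess_class P fs H w r"

definition span_fun :: "(nat \<Rightarrow> real) \<Rightarrow> 'a \<Rightarrow> real" where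
  "span_fun c x = (\<Sum>k<r0. c k * \<psi> k x)"

definition admissible :: "('a \<Rightarrow> real) \<Rightarrow> ('a \<Rightarrow> real) \<Rightarrow> bool" where
  "admissible h e \<longleftrightarrow> e \<in> borel_measurable P \<and> (\<forall>x\<in>space P. \<bar>e x\<bar> \<le> w) \<and>
     (\<integral>x. (h x + e x - fs x)^2 \<partial>P) \<le> r"

definition coeffs :: "(nat \<Rightarrow> real) set" where
  "coeffs = {c. span_fun c \<in> H \<and> (\<exists>e. admissible (span_fun c) e)}"

definition sign_mass :: "(nat \<Rightarrow> 'a) \<times> (nat \<Rightarrow> real) \<Rightarrow> 'a \<Rightarrow> real" where
  "sign_mass z p = (\<Sum>j<n. if fst z j = p then snd z j else 0)"

definition perturbation_gain :: "(nat \<Rightarrow> 'a) \<times> (nat \<Rightarrow> real) \<Rightarrow> real" where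
  "perturbation_gain z = (\<Sum>i<n. snd z i * sgn (sign_mass z (fst z i)))"

definition coeff_objective :: "(nat \<Rightarrow> real) \<Rightarrow> (nat \<Rightarrow> 'a) \<times> (nat \<Rightarrow> real) \<Rightarrow> real" where
  "coeff_objective c z =
     (\<Sum>i<n. snd z i * (span_fun c (fst z i) - fs (fst z i))) / n + w * perturbation_gain z / n"

lemma bounded_measurable_span_fun: "bounded_measurable P (span_fun c)"
  unfolding span_fun_def[abs_def] using bounded_measurable_\<psi>
  by (auto intro!: bounded_measurable_intros)

lemma excess_class_eq:
  "G = {(\<lambda>x. span_fun c x + e x - fs x) | c e. c \<in> coeffs \<and> admissible (span_fun c) e}"
proof (intro set_eqI iffI)
  fix g assume "g \<in> G"
  then obtain h e where "g = (\<lambda>x. h x + e x - fs x)" "h \<in> H" "admissible h e"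
    by (auto simp: excess_class_def admissible_def)
  moreover obtain c where "h = span_fun c"
    using H_subset_span[OF \<open>h \<in> H\<close>] by (auto simp: span_fun_def[abs_def])
  ultimately show "g \<in> {(\<lambda>x. span_fun c x + e x - fs x) | c e. c \<in> coeffs \<and> admissible (span_fun c) e}"
    by (auto simp: coeffs_def)
qed (auto simp: excess_class_def coeffs_def admissible_def)

lemma bounded_measurable_excess_class:
  assumes "g \<in> G"
  shows "bounded_measurable P g"
proof -
  obtain c e where e: "admissible (span_fun c) e" and g: "g = (\<lambda>x. span_fun c x + e x - fs x)"
    using assms unfolding excess_class_eq by blast
  from e have "bounded_measurable P e"
    unfolding admissible_def bounded_measurable_def by blast
  then show ?thesis
    unfolding g using bounded_measurable_span_fun bounded_measurable_fs
    by (auto intro!: bounded_measurable_intros)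
qed

lemma pred_sample_eq [measurable]:
  assumes "i < n" "j < n"
  shows "Measurable.pred (rad_measure P n) (\<lambda>z. fst z i = fst z j)"
proof -
  have "(\<lambda>z. (fst z i, fst z j)) \<in> measurable (rad_measure P n) (P \<Otimes>\<^sub>M P)"
    using assms by measurable
  from measurable_sets[OF this diagonal_in_sets]
  have "(\<lambda>z. (fst z i, fst z j)) -` {z \<in> space (P \<Otimes>\<^sub>M P). fst z = snd z} \<inter> space (rad_measure P n)
      \<in> sets (rad_measure P n)" .
  also have "(\<lambda>z. (fst z i, fst z j)) -` {z \<in> space (P \<Otimes>\<^sub>M P). fst z = snd z} \<inter> space (rad_measure P n) =
      {z \<in> space (rad_measure P n). fst z i = fst z j}"
    using assms sample_in_space by (auto simp: space_pair_measure)
  finally show ?thesis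
    by (simp add: pred_def)
qed

lemma borel_measurable_perturbation_gain [measurable]: "perturbation_gain \<in> borel_measurable (rad_measure P n)"
  unfolding perturbation_gain_def sign_mass_def by measurable

lemma borel_measurable_coeff_objective [measurable]: "coeff_objective c \<in> borel_measurable (rad_measure P n)"
proof -
  have [measurable]: "span_fun c \<in> borel_measurable P" "fs \<in> borel_measurable P"
    using bounded_measurable_span_fun bounded_measurable_fs by auto
  show ?thesis
    unfolding coeff_objective_def by measurable
qed

lemma sum_signs_regroup:
  "(\<Sum>i<n. snd z i * h (fst z i)) = (\<Sum>p\<in>fst z ` {..<n}. h p * sign_mass z p)"
proof -
  have "(\<Sum>p\<in>fst z ` {..<n}. h p * sign_mass z p) =
      (\<Sum>p\<in>fst z ` {..<n}. \<Sum>j<n. if fst z j = p then h p * snd z j else 0)"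
    unfolding sign_mass_def by (simp add: sum_distrib_left if_distrib cong: if_cong)
  also have "\<dots> = (\<Sum>j<n. \<Sum>p\<in>fst z ` {..<n}. if fst z j = p then h p * snd z j else 0)"
    by (rule sum.swap)
  also have "\<dots> = (\<Sum>j<n. h (fst z j) * snd z j)"
    by (simp add: if_distrib cong: if_cong)
  finally show ?thesis
    by (simp add: mult.commute)
qed

lemma perturbation_gain_eq: "perturbation_gain z = (\<Sum>p\<in>fst z ` {..<n}. \<bar>sign_mass z p\<bar>)"
  unfolding perturbation_gain_def sum_signs_regroup[of z "\<lambda>p. sgn (sign_mass z p)"]
  by (simp add: abs_sgn mult.commute)

lemma sum_perturbation_le:
  assumes z: "z \<in> space (rad_measure P n)" and e: "\<forall>x\<in>space P. \<bar>e x\<bar> \<le> w"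
  shows "(\<Sum>i<n. snd z i * e (fst z i)) \<le> w * perturbation_gain z"
proof -
  have "(\<Sum>i<n. snd z i * e (fst z i)) = (\<Sum>p\<in>fst z ` {..<n}. e p * sign_mass z p)"
    by (rule sum_signs_regroup)
  also have "\<dots> \<le> (\<Sum>p\<in>fst z ` {..<n}. w * \<bar>sign_mass z p\<bar>)"
  proof (intro sum_mono)
    fix p assume "p \<in> fst z ` {..<n}"
    then have "\<bar>e p\<bar> \<le> w"
      using e sample_in_space[OF z] by auto
    have "e p * sign_mass z p \<le> \<bar>e p\<bar> * \<bar>sign_mass z p\<bar>"
      by (metis abs_ge_self abs_mult)
    also have "\<dots> \<le> w * \<bar>sign_mass z p\<bar>"
      using \<open>\<bar>e p\<bar> \<le> w\<close> by (intro mult_right_mono) auto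
    finally show "e p * sign_mass z p \<le> w * \<bar>sign_mass z p\<bar>" .
  qed
  also have "\<dots> = w * perturbation_gain z"
    by (simp add: perturbation_gain_eq sum_distrib_left)
  finally show ?thesis .
qed

lemma admissible_attaining_gain:
  assumes z: "z \<in> space (rad_measure P n)" and [measurable]: "h \<in> borel_measurable P"
    and e: "admissible h e"
  obtains e' where "admissible h e'" "(\<Sum>i<n. snd z i * e' (fst z i)) = w * perturbation_gain z"
proof -
  define X where "X = fst z ` {..<n}"
  have X: "finite X" "X \<subseteq> space P"
    using sample_in_space[OF z] by (auto simp: X_def)
  have [measurable]: "e \<in> borel_measurable P" "fs \<in> borel_measurable P"
    using e bounded_measurable_fs by (auto simp: admissible_def)
  \<comment> \<open>\<open>P\<close> has no atoms, so changing \<open>e\<close> on the sample points is invisible in \<open>L\<^sup>2(P)\<close>\<close>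
  obtain e' where [measurable]: "e' \<in> borel_measurable P"
    and e'_X: "\<And>x. x \<in> X \<Longrightarrow> e' x = w * sgn (sign_mass z x)"
    and e'_not_X: "\<And>x. x \<notin> X \<Longrightarrow> e' x = e x" and AE_eq: "AE x in P. e' x = e x"
  proof (rule finite_modification[OF X(1) _ \<open>e \<in> borel_measurable P\<close>, where v = "\<lambda>x. w * sgn (sign_mass z x)"])
    show "{x} \<in> null_sets P" if "x \<in> X" for x
      using singleton_null X(2) that by auto
  qed blast
  have "(\<integral>x. (h x + e' x - fs x)^2 \<partial>P) = (\<integral>x. (h x + e x - fs x)^2 \<partial>P)"
    using AE_eq by (intro integral_cong_AE) (auto elim!: eventually_mono)
  moreover have "\<bar>e' x\<bar> \<le> w" if "x \<in> space P" for x
    using e that w_nonneg by (cases "x \<in> X") (auto simp: e'_X e'_not_X abs_mult abs_sgn_eq admissible_def)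
  ultimately have "admissible h e'"
    using e by (auto simp: admissible_def)
  moreover have "(\<Sum>i<n. snd z i * e' (fst z i)) = w * perturbation_gain z"
    unfolding perturbation_gain_def sum_distrib_left
    by (intro sum.cong) (simp_all add: e'_X X_def)
  ultimately show ?thesis
    using that by blast
qed

lemma rad_avg_span_fun:
  "rad_avg n z (\<lambda>x. span_fun c x + e x - fs x) =
     (\<Sum>i<n. snd z i * (span_fun c (fst z i) - fs (fst z i))) / n + (\<Sum>i<n. snd z i * e (fst z i)) / n"
  unfolding rad_avg_def by (simp add: sum.distrib[symmetric] add_divide_distrib[symmetric] algebra_simps)

lemma upper_bound_rad_avg_iff:
  assumes z: "z \<in> space (rad_measure P n)"
  shows "(\<forall>g\<in>G. rad_avg n z g \<le> u) \<longleftrightarrow> (\<forall>c\<in>coeffs. coeff_objective c z \<le> u)"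
proof
  assume bound: "\<forall>g\<in>G. rad_avg n z g \<le> u"
  show "\<forall>c\<in>coeffs. coeff_objective c z \<le> u"
  proof
    fix c assume c: "c \<in> coeffs"
    then obtain e where "admissible (span_fun c) e"
      by (auto simp: coeffs_def)
    then obtain e' where e': "admissible (span_fun c) e'"
      "(\<Sum>i<n. snd z i * e' (fst z i)) = w * perturbation_gain z"
      using admissible_attaining_gain[OF z bounded_measurable_measurable[OF bounded_measurable_span_fun]]
      by blast
    then have "(\<lambda>x. span_fun c x + e' x - fs x) \<in> G"
      using c unfolding excess_class_eq by blast
    then show "coeff_objective c z \<le> u"
      using bound e'(2) by (force simp: rad_avg_span_fun coeff_objective_def)
  qed
next
  assume bound: "\<forall>c\<in>coeffs. coeff_objective c z \<le> u"
  show "\<forall>g\<in>G. rad_avg n z g \<le> u"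
  proof
    fix g assume "g \<in> G"
    then obtain c e where ce: "c \<in> coeffs" "admissible (span_fun c) e" "g = (\<lambda>x. span_fun c x + e x - fs x)"
      unfolding excess_class_eq by blast
    have "(\<Sum>i<n. snd z i * e (fst z i)) \<le> w * perturbation_gain z"
      using ce(2) by (intro sum_perturbation_le[OF z]) (auto simp: admissible_def)
    then have "rad_avg n z g \<le> coeff_objective c z"
      unfolding ce(3) rad_avg_span_fun coeff_objective_def using n_pos by (simp add: divide_right_mono)
    then show "rad_avg n z g \<le> u"
      using bound ce(1) by force
  qed
qed

lemma continuous_on_coeff_objective: "continuous_on UNIV (\<lambda>c. coeff_objective c z)"
  unfolding coeff_objective_def span_fun_def using n_pos
  by (intro continuous_intros continuous_on_product_coordinates) auto

lemma rad_sup_eq_SUP_dense: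
  fixes g :: "nat \<Rightarrow> nat \<Rightarrow> real"
  assumes g: "range g \<subseteq> coeffs" "coeffs \<subseteq> closure (range g)" and z: "z \<in> space (rad_measure P n)"
  shows "rad_sup n G z = (SUP k. coeff_objective (g k) z)"
proof -
  have "g 0 \<in> coeffs"
    using g(1) by auto
  moreover from this obtain e where "admissible (span_fun (g 0)) e"
    by (auto simp: coeffs_def)
  ultimately have "G \<noteq> {}"
    unfolding excess_class_eq by blast
  have closure_le: "(\<forall>c\<in>coeffs. coeff_objective c z \<le> u) \<longleftrightarrow> (\<forall>k. coeff_objective (g k) z \<le> u)" for u
  proof
    assume "\<forall>k. coeff_objective (g k) z \<le> u"
    then have "closure (range g) \<subseteq> {c. coeff_objective c z \<le> u}"
      by (intro closure_minimal closed_Collect_le continuous_on_coeff_objective continuous_on_const) auto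
    then show "\<forall>c\<in>coeffs. coeff_objective c z \<le> u"
      using g(2) by auto
  qed (use g(1) in auto)
  have "rad_sup n G z = Sup (rad_avg n z ` G)"
    using \<open>G \<noteq> {}\<close> by (rule rad_sup_eq_Sup)
  also have "\<dots> = (SUP k. coeff_objective (g k) z)"
    by (intro Sup_real_cong_upper_bounds) (simp add: upper_bound_rad_avg_iff[OF z] closure_le)
  finally show ?thesis .
qed

lemma borel_measurable_rad_sup: "rad_sup n G \<in> borel_measurable (rad_measure P n)"
proof (cases "coeffs = {}")
  case True
  then have "rad_sup n G = (\<lambda>z. 0)"
    by (simp add: fun_eq_iff rad_sup_def excess_class_eq)
  then show ?thesis by simp
next
  case False
  obtain D where D: "D \<subseteq> coeffs" "countable D" "coeffs \<subseteq> closure D"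
    by (rule countable_dense_subset)
  with False have "D \<noteq> {}"
    by auto
  then have "range (from_nat_into D) = D"
    using D(2) by (rule range_from_nat_into)
  then have "rad_sup n G z = (SUP k. coeff_objective (from_nat_into D k) z)"
    if "z \<in> space (rad_measure P n)" for z
    using D that by (intro rad_sup_eq_SUP_dense) auto
  moreover have "(\<lambda>z. SUP k. coeff_objective (from_nat_into D k) z) \<in> borel_measurable (rad_measure P n)"
    by (intro borel_measurable_Sup_range borel_measurable_coeff_objective)
  ultimately show ?thesis
    by (simp cong: measurable_cong)
qed

end

locale finite_rank_class_basis = finite_rank_class + orthonormal_family P m \<phi> for m \<phi> +
  fixes A :: "nat \<Rightarrow> nat \<Rightarrow> real"
  assumes m_le_r0: "m \<le> r0"
    and \<psi>_expansion: "k < r0 \<Longrightarrow> AE x in P. \<psi> k x = (\<Sum>l<m. A k l * \<phi> l x)"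
begin

definition expansion_holds :: "'a \<Rightarrow> bool" where
  "expansion_holds x \<longleftrightarrow> (\<forall>k<r0. \<psi> k x = (\<Sum>l<m. A k l * \<phi> l x))"

definition target_coeff :: "nat \<Rightarrow> real" where
  "target_coeff l = (\<integral>x. fs x * \<phi> l x \<partial>P)"

definition target_residual :: "'a \<Rightarrow> real" where
  "target_residual x = fs x - (\<Sum>l<m. target_coeff l * \<phi> l x)"

definition error_coeff :: "(nat \<Rightarrow> real) \<Rightarrow> nat \<Rightarrow> real" where
  "error_coeff c l = (\<Sum>k<r0. c k * A k l) - target_coeff l"

definition error_proj :: "(nat \<Rightarrow> real) \<Rightarrow> 'a \<Rightarrow> real" where
  "error_proj c x = (\<Sum>l<m. error_coeff c l * \<phi> l x)"

lemma AE_expansion_holds: "AE x in P. expansion_holds x"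
proof -
  have "AE x in P. \<forall>k\<in>{..<r0}. \<psi> k x = (\<Sum>l<m. A k l * \<phi> l x)"
    using \<psi>_expansion by (subst AE_finite_all) auto
  then show ?thesis
    unfolding expansion_holds_def by eventually_elim auto
qed

lemma bounded_measurable_target_residual: "bounded_measurable P target_residual"
  unfolding target_residual_def[abs_def] using bounded_measurable_fs bounded_measurable_expansion
  by (rule bounded_measurable_diff)

lemma target_residual_orthogonal: "l < m \<Longrightarrow> (\<integral>x. target_residual x * \<phi> l x \<partial>P) = 0"
  unfolding target_residual_def target_coeff_def
  by (rule residual_orthogonal[OF bounded_measurable_fs])

lemma span_fun_minus_target:
  assumes "expansion_holds x"
  shows "span_fun c x - fs x = error_proj c x - target_residual x"
proof -
  have "span_fun c x = (\<Sum>k<r0. \<Sum>l<m. c k * (A k l * \<phi> l x))"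
    using assms unfolding span_fun_def expansion_holds_def by (simp add: sum_distrib_left)
  also have "\<dots> = (\<Sum>l<m. (\<Sum>k<r0. c k * A k l) * \<phi> l x)"
    by (subst sum.swap) (simp add: sum_distrib_right mult.assoc)
  finally show ?thesis
    by (simp add: error_proj_def target_residual_def error_coeff_def left_diff_distrib sum_subtractf)
qed

lemma integral_error_proj_square: "(\<integral>x. (error_proj c x)^2 \<partial>P) = (\<Sum>l<m. (error_coeff c l)^2)"
  unfolding error_proj_def by (rule integral_expansion_square)

lemma sqrt_integral_square_le:
  assumes "e \<in> borel_measurable P" "\<forall>x\<in>space P. \<bar>e x\<bar> \<le> w"
  shows "sqrt (\<integral>x. (e x)^2 \<partial>P) \<le> w"
proof -
  have "bounded_measurable P e"
    using assms by (auto simp: bounded_measurable_def)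
  moreover have "(e x)^2 \<le> w^2" if "x \<in> space P" for x
    using assms(2) that power_mono[of "\<bar>e x\<bar>" w 2] by simp
  ultimately have "(\<integral>x. (e x)^2 \<partial>P) \<le> (\<integral>x. w^2 \<partial>P)"
    by (intro integral_mono integrable_bounded_measurable bounded_measurable_power2) auto
  then have "sqrt (\<integral>x. (e x)^2 \<partial>P) \<le> sqrt (w^2)"
    by (intro real_sqrt_le_mono) (simp add: prob_space)
  then show ?thesis
    using w_nonneg by simp
qed

lemma integral_error_proj_square_eq:
  assumes e: "admissible (span_fun c) e"
  shows "(\<integral>x. (error_proj c x)^2 \<partial>P) =
    (\<integral>x. error_proj c x * (span_fun c x + e x - fs x) \<partial>P) + (\<integral>x. error_proj c x * (- e x) \<partial>P)"
proof -
  from e have bm_e: "bounded_measurable P e"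
    by (auto simp: admissible_def bounded_measurable_def)
  define u where "u x = span_fun c x + e x - fs x" for x
  have bm_u: "bounded_measurable P u"
    unfolding u_def[abs_def] using bm_e bounded_measurable_span_fun bounded_measurable_fs
    by (auto intro!: bounded_measurable_intros)
  have bm_Z: "bounded_measurable P (error_proj c)"
    unfolding error_proj_def[abs_def] by (rule bounded_measurable_expansion)
  note integrable = integrable_bounded_measurable[OF bounded_measurable_mult]
  \<comment> \<open>\<open>u = error_proj c - target_residual + e\<close> a.e., and \<open>target_residual\<close> is orthogonal to \<open>error_proj c\<close>\<close>
  have "AE x in P. error_proj c x * u x - error_proj c x * e x =
      error_proj c x * error_proj c x - error_proj c x * target_residual x"
    using AE_expansion_holds
  proof eventually_elim
    case (elim x)
    have u: "u x = error_proj c x - target_residual x + e x"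
      unfolding u_def using span_fun_minus_target[OF elim, of c] by linarith
    show ?case
      unfolding u by (simp add: algebra_simps)
  qed
  then have "(\<integral>x. error_proj c x * error_proj c x - error_proj c x * target_residual x \<partial>P) =
      (\<integral>x. error_proj c x * u x - error_proj c x * e x \<partial>P)"
    using bm_u bm_e bm_Z bounded_measurable_target_residual
    by (intro integral_cong_AE[symmetric]) auto
  moreover have "(\<integral>x. error_proj c x * target_residual x \<partial>P) = 0"
    unfolding error_proj_def
    by (rule integral_expansion_mult_orthogonal[OF bounded_measurable_target_residual target_residual_orthogonal])
  ultimately show ?thesis
    using integrable[OF bm_Z bm_Z] integrable[OF bm_Z bounded_measurable_target_residual]
      integrable[OF bm_Z bm_u] integrable[OF bm_Z bm_e]
    by (simp add: u_def power2_eq_square)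
qed

lemma error_coeff_norm_le:
  assumes "c \<in> coeffs"
  shows "L2_set (error_coeff c) {..<m} \<le> sqrt r + w"
proof -
  obtain e where e: "admissible (span_fun c) e"
    using assms by (auto simp: coeffs_def)
  then have bm_e: "bounded_measurable P e"
    by (auto simp: admissible_def bounded_measurable_def)
  have bm_Z: "bounded_measurable P (error_proj c)"
    unfolding error_proj_def[abs_def] by (rule bounded_measurable_expansion)
  have bm_u: "bounded_measurable P (\<lambda>x. span_fun c x + e x - fs x)"
    using bm_e bounded_measurable_span_fun bounded_measurable_fs by (auto intro!: bounded_measurable_intros)
  define N where "N = L2_set (error_coeff c) {..<m}"
  have N_eq: "N = sqrt (\<integral>x. (error_proj c x)^2 \<partial>P)"
    by (simp add: N_def L2_set_def integral_error_proj_square)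
  have "N^2 = (\<integral>x. (error_proj c x)^2 \<partial>P)"
    by (simp add: N_def L2_set_def integral_error_proj_square sum_nonneg)
  also have "\<dots> = (\<integral>x. error_proj c x * (span_fun c x + e x - fs x) \<partial>P) + (\<integral>x. error_proj c x * (- e x) \<partial>P)"
    by (rule integral_error_proj_square_eq[OF e])
  also have "\<dots> \<le> N * sqrt (\<integral>x. (span_fun c x + e x - fs x)^2 \<partial>P) + N * sqrt (\<integral>x. (- e x)^2 \<partial>P)"
    unfolding N_eq using bm_Z bm_u bm_e
    by (intro add_mono Cauchy_Schwarz_integral)
      (auto intro!: integrable_bounded_measurable bounded_measurable_intros)
  also have "\<dots> \<le> N * sqrt r + N * w"
    using e sqrt_integral_square_le[of e]
    by (intro add_mono mult_left_mono) (auto simp: N_def admissible_def)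
  finally have "N * N \<le> N * (sqrt r + w)"
    by (simp add: power2_eq_square distrib_left)
  moreover have "N \<ge> 0"
    unfolding N_def by (rule L2_set_nonneg)
  ultimately have "N \<le> sqrt r + w"
    using w_nonneg r_nonneg by (cases "N = 0") (auto simp: mult_le_cancel_left_pos)
  then show ?thesis
    by (simp add: N_def)
qed

definition basis_sign_sum :: "nat \<Rightarrow> (nat \<Rightarrow> 'a) \<times> (nat \<Rightarrow> real) \<Rightarrow> real" where
  "basis_sign_sum l z = (\<Sum>i<n. snd z i * \<phi> l (fst z i))"

definition residual_sign_sum :: "(nat \<Rightarrow> 'a) \<times> (nat \<Rightarrow> real) \<Rightarrow> real" where
  "residual_sign_sum z = (\<Sum>i<n. snd z i * target_residual (fst z i))"

definition basis_sign_norm :: "(nat \<Rightarrow> 'a) \<times> (nat \<Rightarrow> real) \<Rightarrow> real" where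
  "basis_sign_norm z = L2_set (\<lambda>l. basis_sign_sum l z) {..<m}"

definition rad_bound :: "(nat \<Rightarrow> 'a) \<times> (nat \<Rightarrow> real) \<Rightarrow> real" where
  "rad_bound z = ((sqrt r + w) * basis_sign_norm z - residual_sign_sum z) / n + w * perturbation_gain z / n"

lemma coeff_objective_le_rad_bound:
  assumes "\<forall>i<n. expansion_holds (fst z i)" "c \<in> coeffs"
  shows "coeff_objective c z \<le> rad_bound z"
proof -
  have "(\<Sum>i<n. snd z i * (span_fun c (fst z i) - fs (fst z i))) =
      (\<Sum>i<n. \<Sum>l<m. error_coeff c l * (snd z i * \<phi> l (fst z i))) - residual_sign_sum z"
    using assms(1)
    by (simp add: span_fun_minus_target error_proj_def residual_sign_sum_def right_diff_distrib
        sum_subtractf sum_distrib_left mult.left_commute)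
  also have "\<dots> = (\<Sum>l<m. error_coeff c l * basis_sign_sum l z) - residual_sign_sum z"
    by (subst sum.swap) (simp add: basis_sign_sum_def sum_distrib_left)
  also have "\<dots> \<le> (sqrt r + w) * basis_sign_norm z - residual_sign_sum z"
  proof -
    have "(\<Sum>l<m. error_coeff c l * basis_sign_sum l z) \<le> (\<Sum>l<m. \<bar>error_coeff c l\<bar> * \<bar>basis_sign_sum l z\<bar>)"
      by (intro sum_mono) (metis abs_ge_self abs_mult)
    also have "\<dots> \<le> L2_set (error_coeff c) {..<m} * basis_sign_norm z"
      unfolding basis_sign_norm_def by (rule L2_set_mult_ineq)
    also have "\<dots> \<le> (sqrt r + w) * basis_sign_norm z"
      using error_coeff_norm_le[OF assms(2)] by (intro mult_right_mono) (auto simp: basis_sign_norm_def)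
    finally show ?thesis by simp
  qed
  finally show ?thesis
    unfolding coeff_objective_def rad_bound_def using n_pos
    by (simp add: divide_right_mono)
qed


lemma borel_measurable_basis_sign_sum [measurable]:
  "l < m \<Longrightarrow> basis_sign_sum l \<in> borel_measurable (rad_measure P n)"
  using bounded_measurable_basis[of l] unfolding basis_sign_sum_def[abs_def]
  by (intro borel_measurable_sum borel_measurable_times borel_measurable_sign
      measurable_compose[OF measurable_sample]) auto

lemma integral_basis_sign_sum_square:
  assumes l: "l < m"
  shows "integrable (rad_measure P n) (\<lambda>z. (basis_sign_sum l z)^2)"
    "(\<integral>z. (basis_sign_sum l z)^2 \<partial>rad_measure P n) = n"
proof -
  let ?t = "\<lambda>i j z. (snd z i * snd z j) * (\<phi> l (fst z i) * \<phi> l (fst z j))"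
  have sq: "(\<lambda>z. (basis_sign_sum l z)^2) = (\<lambda>z. \<Sum>i<n. \<Sum>j<n. ?t i j z)"
    unfolding basis_sign_sum_def power2_eq_square sum_product by (simp add: fun_eq_iff mult_ac)
  note t = integral_sign_pair_mult_samples[OF _ _ bounded_measurable_basis[OF l] bounded_measurable_basis[OF l]]
  show "integrable (rad_measure P n) (\<lambda>z. (basis_sign_sum l z)^2)"
    unfolding sq by (intro Bochner_Integration.integrable_sum) (simp add: t(1))
  have "(\<integral>z. (basis_sign_sum l z)^2 \<partial>rad_measure P n) = (\<Sum>i<n. \<integral>z. (\<Sum>j<n. ?t i j z) \<partial>rad_measure P n)"
    unfolding sq by (intro Bochner_Integration.integral_sum Bochner_Integration.integrable_sum) (simp add: t(1))
  also have "\<dots> = (\<Sum>i<n. \<Sum>j<n. \<integral>z. ?t i j z \<partial>rad_measure P n)"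
    by (intro sum.cong refl Bochner_Integration.integral_sum) (simp add: t(1))
  also have "\<dots> = (\<Sum>i<n. \<Sum>j<n. if i = j then 1 else 0)"
    using t(2) orthonormal[OF l l] by (intro sum.cong) auto
  finally show "(\<integral>z. (basis_sign_sum l z)^2 \<partial>rad_measure P n) = n"
    by simp
qed

lemma borel_measurable_basis_sign_norm [measurable]: "basis_sign_norm \<in> borel_measurable (rad_measure P n)"
  unfolding basis_sign_norm_def[abs_def] L2_set_def
  by (intro measurable_compose[OF _ borel_measurable_sqrt] borel_measurable_sum borel_measurable_power
      borel_measurable_basis_sign_sum) auto

lemma basis_sign_norm_square: "(basis_sign_norm z)^2 = (\<Sum>l<m. (basis_sign_sum l z)^2)"
  unfolding basis_sign_norm_def L2_set_def by (simp add: sum_nonneg)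

lemma integral_basis_sign_norm_le:
  "integrable (rad_measure P n) basis_sign_norm"
  "(\<integral>z. basis_sign_norm z \<partial>rad_measure P n) \<le> sqrt (m * n)"
proof -
  interpret R: prob_space "rad_measure P n"
    by (rule prob_space_rad_measure)
  have int_sq: "integrable (rad_measure P n) (\<lambda>z. (basis_sign_norm z)^2)"
    unfolding basis_sign_norm_square using integral_basis_sign_sum_square(1) by auto
  show int: "integrable (rad_measure P n) basis_sign_norm"
    by (rule R.square_integrable_imp_integrable[OF borel_measurable_basis_sign_norm int_sq])
  \<comment> \<open>Jensen: \<open>E Y \<le> sqrt (E Y\<^sup>2)\<close>\<close>
  have "(\<integral>z. basis_sign_norm z * 1 \<partial>rad_measure P n) \<le>
      sqrt (\<integral>z. (basis_sign_norm z)^2 \<partial>rad_measure P n) * sqrt (\<integral>z. 1^2 \<partial>rad_measure P n)"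
    by (rule Cauchy_Schwarz_integral) (use int int_sq in auto)
  moreover have "(\<integral>z. (basis_sign_norm z)^2 \<partial>rad_measure P n) = m * n"
    unfolding basis_sign_norm_square using integral_basis_sign_sum_square
    by (simp add: Bochner_Integration.integral_sum)
  ultimately show "(\<integral>z. basis_sign_norm z \<partial>rad_measure P n) \<le> sqrt (m * n)"
    by (simp add: R.prob_space)
qed

lemma integral_residual_sign_sum:
  "integrable (rad_measure P n) residual_sign_sum" "(\<integral>z. residual_sign_sum z \<partial>rad_measure P n) = 0"
  unfolding residual_sign_sum_def[abs_def]
  using integral_sign_mult_sample[OF _ bounded_measurable_target_residual]
  by (auto simp: Bochner_Integration.integral_sum)

lemma integral_perturbation_gain_le:
  "integrable (rad_measure P n) perturbation_gain" "(\<integral>z. perturbation_gain z \<partial>rad_measure P n) \<le> n"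
proof -
  have abs_le: "\<bar>perturbation_gain z\<bar> \<le> (\<Sum>i<n. \<bar>snd z i\<bar>)" for z
    unfolding perturbation_gain_def
    by (rule order_trans[OF sum_abs sum_mono]) (auto simp: abs_mult abs_sgn_eq)
  have int: "integrable (rad_measure P n) (\<lambda>z. \<Sum>i<n. \<bar>snd z i\<bar>)"
    using integral_abs_sign_rad_measure(1) by auto
  show "integrable (rad_measure P n) perturbation_gain"
    using abs_le by (intro Bochner_Integration.integrable_bound[OF int]) auto
  then have "(\<integral>z. perturbation_gain z \<partial>rad_measure P n) \<le> (\<integral>z. (\<Sum>i<n. \<bar>snd z i\<bar>) \<partial>rad_measure P n)"
    using abs_le int by (intro integral_mono) (auto simp: abs_le_iff)
  also have "\<dots> = n"
    using integral_abs_sign_rad_measure by (simp add: Bochner_Integration.integral_sum)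
  finally show "(\<integral>z. perturbation_gain z \<partial>rad_measure P n) \<le> n" .
qed

lemma integral_rad_bound_le:
  "integrable (rad_measure P n) rad_bound"
  "(\<integral>z. rad_bound z \<partial>rad_measure P n) \<le> sqrt (r * r0 / n) + 2 * w"
proof -
  note ints = integral_basis_sign_norm_le(1) integral_residual_sign_sum(1) integral_perturbation_gain_le(1)
  show "integrable (rad_measure P n) rad_bound"
    unfolding rad_bound_def[abs_def] using ints by auto
  have "(\<integral>z. rad_bound z \<partial>rad_measure P n) =
      ((sqrt r + w) * (\<integral>z. basis_sign_norm z \<partial>rad_measure P n)
        - (\<integral>z. residual_sign_sum z \<partial>rad_measure P n)) / n
      + w * (\<integral>z. perturbation_gain z \<partial>rad_measure P n) / n"
    unfolding rad_bound_def[abs_def] using ints by simp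
  also have "\<dots> \<le> (sqrt r + w) * sqrt (m * n) / n + w * n / n"
  proof -
    have "(sqrt r + w) * (\<integral>z. basis_sign_norm z \<partial>rad_measure P n) \<le> (sqrt r + w) * sqrt (m * n)"
      using integral_basis_sign_norm_le(2) w_nonneg r_nonneg by (intro mult_left_mono) auto
    then show ?thesis
      using integral_residual_sign_sum(2) integral_perturbation_gain_le(2) w_nonneg n_pos
      by (intro add_mono divide_right_mono mult_left_mono) auto
  qed
  also have "\<dots> = sqrt r * sqrt (m / n) + w * sqrt (m / n) + w"
    using n_pos by (simp add: field_simps real_sqrt_mult real_sqrt_divide)
  also have "\<dots> \<le> sqrt r * sqrt (r0 / n) + w * 1 + w"
  proof -
    have "sqrt (m / n) \<le> sqrt (r0 / n)"
      using m_le_r0 by (simp add: divide_right_mono)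
    moreover have "sqrt (r0 / n) \<le> 1"
      using r0_le_n n_pos by simp
    ultimately show ?thesis
      using w_nonneg r_nonneg by (intro add_mono mult_left_mono) auto
  qed
  also have "\<dots> = sqrt (r * r0 / n) + 2 * w"
    by (simp add: real_sqrt_mult[symmetric])
  finally show "(\<integral>z. rad_bound z \<partial>rad_measure P n) \<le> sqrt (r * r0 / n) + 2 * w" .
qed

lemma AE_rad_sup_bounds:
  assumes "g \<in> G"
  shows "AE z in rad_measure P n. rad_avg n z g \<le> rad_sup n G z \<and> rad_sup n G z \<le> rad_bound z"
  using AE_samples[OF AE_expansion_holds] AE_space
proof eventually_elim
  case (elim z)
  then have "\<forall>g\<in>G. rad_avg n z g \<le> rad_bound z"
    using coeff_objective_le_rad_bound upper_bound_rad_avg_iff by blast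
  moreover have "rad_sup n G z = Sup (rad_avg n z ` G)"
    using assms by (intro rad_sup_eq_Sup) auto
  ultimately show ?case
    using assms by (auto intro!: cSup_upper cSup_least bdd_aboveI2)
qed

theorem rademacher_excess_class_le_basis:
  "integrable (rad_measure P n) (rad_sup n G) \<and> rademacher P n G \<le> sqrt (r * r0 / n) + 2 * w"
proof (cases "G = {}")
  case True
  then show ?thesis
    using w_nonneg r_nonneg by (simp add: rad_sup_def[abs_def] rademacher_def)
next
  case False
  then obtain g where g: "g \<in> G"
    by blast
  note bounds = AE_rad_sup_bounds[OF g]
  have "integrable (rad_measure P n) (\<lambda>z. \<bar>rad_avg n z g\<bar> + \<bar>rad_bound z\<bar>)"
    using integrable_rad_avg[OF bounded_measurable_excess_class[OF g]] integral_rad_bound_le(1) by auto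
  moreover have "AE z in rad_measure P n. norm (rad_sup n G z) \<le> norm (\<bar>rad_avg n z g\<bar> + \<bar>rad_bound z\<bar>)"
    using bounds by eventually_elim auto
  ultimately have int: "integrable (rad_measure P n) (rad_sup n G)"
    by (intro Bochner_Integration.integrable_bound[OF _ borel_measurable_rad_sup])
  have "AE z in rad_measure P n. rad_sup n G z \<le> rad_bound z"
    using bounds by eventually_elim auto
  then have "rademacher P n G \<le> (\<integral>z. rad_bound z \<partial>rad_measure P n)"
    unfolding rademacher_def by (rule integral_mono_AE[OF int integral_rad_bound_le(1)])
  with int integral_rad_bound_le(2) show ?thesis
    by simp
qed

end

context finite_rank_class
begin

theorem rademacher_excess_class_le:
  "integrable (rad_measure P n) (rad_sup n G) \<and> rademacher P n G \<le> sqrt (r * r0 / n) + 2 * w"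
proof -
  obtain m \<phi> A where "m \<le> r0" "orthonormal_family P m \<phi>"
    "\<forall>k<r0. AE x in P. \<psi> k x = (\<Sum>l<m. A k l * \<phi> l x)"
    using gram_schmidt[of r0 \<psi>] bounded_measurable_\<psi> by blast
  then interpret finite_rank_class_basis P n r0 \<psi> fs H w r m \<phi> A
    by (intro finite_rank_class_basis.intro finite_rank_class_axioms finite_rank_class_basis_axioms.intro) auto
  show ?thesis
    by (rule rademacher_excess_class_le_basis)
qed

end

section \<open>The kernel class\<close>

lemma abs_ip_sph_le_1:
  assumes "x \<in> sph d" "s \<in> sph d"
  shows "\<bar>ip d x s\<bar> \<le> 1"
proof -
  have "\<bar>ip d x s\<bar> \<le> (\<Sum>i<d. \<bar>x i * s i\<bar>)"
    unfolding ip_def by (rule sum_abs)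
  also have "\<dots> \<le> (\<Sum>i<d. ((x i)^2 + (s i)^2) / 2)"
  proof (intro sum_mono)
    fix i
    show "\<bar>x i * s i\<bar> \<le> ((x i)^2 + (s i)^2) / 2"
      using sum_squares_bound[of "\<bar>x i\<bar>" "\<bar>s i\<bar>"] by (simp add: abs_mult)
  qed
  also have "\<dots> = 1"
    using assms by (simp add: sph_def sum.distrib flip: sum_divide_distrib)
  finally show ?thesis .
qed

definition kernel_profile :: "real \<Rightarrow> real" where
  "kernel_profile t = (pi - arccos (max (-1) (min 1 t))) / (2 * pi) * (1 + t)"

text \<open>Clamping the argument of \<^const>\<open>arccos\<close> makes the profile continuous on all of \<open>\<real>\<close>;
  on the sphere it does not change the kernel.\<close>

lemma Kker_eq_kernel_profile:
  assumes "x \<in> sph d" "s \<in> sph d"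
  shows "Kker d x s = kernel_profile (ip d x s)"
proof -
  have "max (-1) (min 1 (ip d x s)) = ip d x s"
    using abs_ip_sph_le_1[OF assms] by auto
  moreover have "Kker d x s = K0 d x s * (1 + ip d x s)"
    by (simp add: Kker_def K1_def algebra_simps)
  ultimately show ?thesis
    by (simp add: K0_def kernel_profile_def)
qed

lemma abs_kernel_profile_le_1:
  assumes "\<bar>t\<bar> \<le> 1"
  shows "\<bar>kernel_profile t\<bar> \<le> 1"
proof -
  define p where "p = (pi - arccos t) / (2 * pi)"
  have "0 \<le> arccos t" "arccos t \<le> pi"
    using assms by (auto intro!: arccos_lbound arccos_ubound)
  then have "0 \<le> p" "p \<le> 1 / 2"
    by (auto simp: p_def field_simps)
  moreover have "0 \<le> 1 + t" "1 + t \<le> 2"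
    using assms by auto
  ultimately have "0 \<le> p * (1 + t)" "p * (1 + t) \<le> 1 / 2 * 2"
    by (simp, intro mult_mono) auto
  moreover have clamp: "max (-1) (min 1 t) = t"
    using assms by auto
  ultimately show ?thesis
    unfolding kernel_profile_def clamp p_def[symmetric] by simp
qed

lemma borel_measurable_ip: "(\<lambda>x. ip d x s) \<in> borel_measurable (lebesgue_d d)"
  unfolding ip_def
  by (intro borel_measurable_sum borel_measurable_times borel_measurable_coordinate borel_measurable_const) auto

lemma borel_measurable_kernel_profile: "kernel_profile \<in> borel_measurable borel"
proof -
  have "continuous_on UNIV kernel_profile"
    unfolding kernel_profile_def by (intro continuous_intros) auto
  then show ?thesis
    by (rule borel_measurable_continuous_onI)
qed

lemma bounded_measurable_Kker:
  assumes "s \<in> sph d"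
  shows "bounded_measurable (unif_sphere d) (\<lambda>x. Kker d x s)"
proof -
  have "(\<lambda>x. kernel_profile (ip d x s)) \<in> borel_measurable (unif_sphere d)"
    by (intro borel_measurable_unif_sphereI measurable_compose[OF borel_measurable_ip borel_measurable_kernel_profile])
  moreover have "(\<lambda>x. Kker d x s) \<in> borel_measurable (unif_sphere d) \<longleftrightarrow>
      (\<lambda>x. kernel_profile (ip d x s)) \<in> borel_measurable (unif_sphere d)"
    by (rule measurable_cong) (simp add: space_unif_sphere Kker_eq_kernel_profile assms)
  moreover have "\<forall>x\<in>space (unif_sphere d). \<bar>Kker d x s\<bar> \<le> 1"
    using assms
    by (auto simp: space_unif_sphere Kker_eq_kernel_profile intro!: abs_kernel_profile_le_1 abs_ip_sph_le_1)
  ultimately show ?thesis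
    by (auto simp: bounded_measurable_def)
qed

lemma bounded_measurable_SH:
  assumes "g \<in> SH d l"
  shows "bounded_measurable (unif_sphere d) g"
proof -
  obtain c where g: "g = (\<lambda>x. if x \<in> sph d then (\<Sum>m\<in>mi d l. c m * (\<Prod>i<d. x i ^ m i)) else 0)"
    using assms by (auto simp: SH_def)
  have "(\<lambda>x. \<Sum>m\<in>mi d l. c m * (\<Prod>i<d. x i ^ m i)) \<in> borel_measurable (unif_sphere d)"
    by (intro borel_measurable_unif_sphereI borel_measurable_sum borel_measurable_times borel_measurable_prod
        borel_measurable_power borel_measurable_coordinate) auto
  then have "g \<in> borel_measurable (unif_sphere d)"
    by (rule measurable_cong[THEN iffD1, rotated]) (simp add: space_unif_sphere g)
  moreover have "\<bar>g x\<bar> \<le> (\<Sum>m\<in>mi d l. \<bar>c m\<bar>)" if "x \<in> sph d" for x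
  proof -
    have "\<bar>\<Prod>i<d. x i ^ m i\<bar> \<le> 1" for m
      using abs_coordinate_le_vnorm[of _ d x] vnorm_sph[OF that]
      by (auto simp: abs_prod power_abs intro!: prod_le_1 power_le_one)
    then have "\<bar>c m * (\<Prod>i<d. x i ^ m i)\<bar> \<le> \<bar>c m\<bar>" for m
      by (simp add: abs_mult mult_left_le)
    then show ?thesis
      using that by (simp add: g) (rule order_trans[OF sum_abs sum_mono])
  qed
  ultimately show ?thesis
    by (auto simp: bounded_measurable_def space_unif_sphere)
qed

lemma bounded_measurable_target:
  assumes "target d k0 \<gamma>0 fs"
  shows "bounded_measurable (unif_sphere d) fs"
proof -
  obtain g where g: "\<forall>l\<le>k0. g l \<in> SH d l" "\<forall>x\<in>sph d. fs x = (\<Sum>l\<le>k0. g l x)"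
    using assms by (auto simp: target_def)
  have "bounded_measurable (unif_sphere d) (\<lambda>x. \<Sum>l\<le>k0. g l x)"
    using g(1) by (intro bounded_measurable_sum bounded_measurable_SH) auto
  moreover have "fs \<in> borel_measurable (unif_sphere d) \<longleftrightarrow>
      (\<lambda>x. \<Sum>l\<le>k0. g l x) \<in> borel_measurable (unif_sphere d)"
    by (rule measurable_cong) (simp add: space_unif_sphere g(2))
  ultimately show ?thesis
    using g(2) by (auto simp: bounded_measurable_def space_unif_sphere)
qed

definition kernel_basis :: "nat \<Rightarrow> nat \<Rightarrow> (nat \<Rightarrow> nat \<Rightarrow> real) \<Rightarrow> (nat \<Rightarrow> nat \<Rightarrow> real) \<Rightarrow> nat \<Rightarrow> (nat \<Rightarrow> real) \<Rightarrow> real" where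
  "kernel_basis d n S U k x = (\<Sum>i<n. Kker d x (S i) * U i k)"

definition kernel_span_ball ::
    "nat \<Rightarrow> nat \<Rightarrow> (nat \<Rightarrow> nat \<Rightarrow> real) \<Rightarrow> (nat \<Rightarrow> nat \<Rightarrow> real) \<Rightarrow> nat \<Rightarrow> real \<Rightarrow> ((nat \<Rightarrow> real) \<Rightarrow> real) set" where
  "kernel_span_ball d n S U r0 Bh = {(\<lambda>x. \<Sum>i<n. Kker d x (S i) * \<alpha> i) | \<alpha>.
     (\<exists>c. \<forall>i<n. \<alpha> i = (\<Sum>k<r0. c k * U i k)) \<and> (\<Sum>i<n. \<Sum>j<n. \<alpha> i * \<alpha> j * Kker d (S i) (S j)) \<le> Bh^2}"

lemma loc_class_eq_excess_class:
  "loc_class d n S U r0 Bh w fs r = excess_class (unif_sphere d) fs (kernel_span_ball d n S U r0 Bh) w r"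
  unfolding loc_class_def Fcls_def excess_class_def kernel_span_ball_def space_unif_sphere
  by (intro equalityI subsetI; clarsimp; fastforce)

lemma kernel_span_ball_subset_span:
  assumes "h \<in> kernel_span_ball d n S U r0 Bh"
  shows "\<exists>c. h = (\<lambda>x. \<Sum>k<r0. c k * kernel_basis d n S U k x)"
proof -
  obtain \<alpha> c where h: "h = (\<lambda>x. \<Sum>i<n. Kker d x (S i) * \<alpha> i)" "\<forall>i<n. \<alpha> i = (\<Sum>k<r0. c k * U i k)"
    using assms unfolding kernel_span_ball_def by blast
  have "(\<Sum>i<n. Kker d x (S i) * \<alpha> i) = (\<Sum>k<r0. c k * kernel_basis d n S U k x)" for x
    using h(2) by (simp add: kernel_basis_def sum_distrib_left mult_ac sum.swap[of _ "{..<n}"])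
  then show ?thesis
    using h(1) by auto
qed

lemma rademacher_loc_class_le:
  assumes d: "d \<ge> 2" and "r0 \<le> n" "0 \<le> w" "0 \<le> r"
    and fs: "bounded_measurable (unif_sphere d) fs"
    and S: "S \<in> space (PiM {..<n} (\<lambda>_. unif_sphere d))"
  shows "integrable (rad_measure (unif_sphere d) n) (rad_sup n (loc_class d n S U r0 Bh w fs r)) \<and>
    rademacher (unif_sphere d) n (loc_class d n S U r0 Bh w fs r) \<le> sqrt (r * r0 / n) + 2 * w"
proof (cases "n = 0")
  case True
  then have "rad_sup n F = (\<lambda>z. 0)" for F :: "((nat \<Rightarrow> real) \<Rightarrow> real) set"
    by (auto simp: fun_eq_iff rad_sup_def image_constant_conv)
  then show ?thesis
    using True assms by (simp add: rademacher_def)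
next
  case False
  have "S i \<in> sph d" if "i < n" for i
    using S that by (auto simp: space_PiM space_unif_sphere PiE_def Pi_def)
  then have "bounded_measurable (unif_sphere d) (kernel_basis d n S U k)" for k
    unfolding kernel_basis_def[abs_def] by (intro bounded_measurable_intros bounded_measurable_Kker) auto
  moreover have "prob_space (unif_sphere d)"
    using d by (intro prob_space_unif_sphere) simp
  moreover have "{x} \<in> null_sets (unif_sphere d)" if "x \<in> space (unif_sphere d)" for x
    using that d singleton_in_sets_unif_sphere emeasure_unif_sphere_singleton
    by (simp add: null_sets_def space_unif_sphere)
  ultimately interpret finite_rank_class "unif_sphere d" n r0 "kernel_basis d n S U" fs
      "kernel_span_ball d n S U r0 Bh" w r
    using assms False diagonal_in_sets_unif_sphere kernel_span_ball_subset_span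
    by (intro finite_rank_class.intro sample_signs.intro finite_rank_class_axioms.intro) auto
  show ?thesis
    unfolding loc_class_eq_excess_class by (rule rademacher_excess_class_le)
qed

theorem mainTheorem9:
  fixes k0 :: nat and \<gamma>0 Bh :: real
  assumes "k0 \<ge> 1" and "\<gamma>0 \<ge> 0" and "Bh > \<gamma>0"
  shows "\<exists>C d0. \<forall>d n \<delta> w fs. d \<ge> d0 \<longrightarrow> n \<ge> m_sum d k0 \<longrightarrow> 0 < \<delta> \<longrightarrow> \<delta> < 1 \<longrightarrow> w > 0 \<longrightarrow>
     target d k0 \<gamma>0 fs \<longrightarrow>
     (\<exists>E \<in> sets (PiM {..<n} (\<lambda>_. unif_sphere d)).
        measure (PiM {..<n} (\<lambda>_. unif_sphere d)) E \<ge> 1 - \<delta> \<and>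
        (\<forall>S\<in>E. \<forall>U \<sigma>. eigdec n (gram d n S) U \<sigma> \<longrightarrow> (\<forall>r>0.
           integrable (rad_measure (unif_sphere d) n)
             (rad_sup n (loc_class d n S U (m_sum d k0) Bh w fs r)) \<and>
           rademacher (unif_sphere d) n (loc_class d n S U (m_sum d k0) Bh w fs r)
             \<le> sqrt (ln (2 / \<delta>)) * (C * real d ^ k0 / real n)
                + sqrt (r * real (m_sum d k0) / real n) + 2 * w)))"
proof (intro exI[of _ "0::real"] exI[of _ "2::nat"] allI impI)
  fix d n :: nat and \<delta> w :: real and fs :: "(nat \<Rightarrow> real) \<Rightarrow> real"
  assume d: "2 \<le> d" and n: "m_sum d k0 \<le> n" and \<delta>: "0 < \<delta>" "\<delta> < 1" and w: "0 < w"
    and fs: "target d k0 \<gamma>0 fs"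
  let ?M = "PiM {..<n} (\<lambda>_. unif_sphere d)"
  have "prob_space ?M"
    using d by (intro prob_space_PiM prob_space_unif_sphere) auto
  then have "measure ?M (space ?M) \<ge> 1 - \<delta>"
    using \<delta> by (simp add: prob_space.prob_space)
  moreover have "integrable (rad_measure (unif_sphere d) n) (rad_sup n (loc_class d n S U (m_sum d k0) Bh w fs r)) \<and>
      rademacher (unif_sphere d) n (loc_class d n S U (m_sum d k0) Bh w fs r)
        \<le> sqrt (r * real (m_sum d k0) / real n) + 2 * w"
    if "S \<in> space ?M" "r > 0" for S U r
    using rademacher_loc_class_le[OF d n _ _ bounded_measurable_target[OF fs] that(1)] w that(2) by simp
  ultimately show "\<exists>E \<in> sets ?M. measure ?M E \<ge> 1 - \<delta> \<and>
      (\<forall>S\<in>E. \<forall>U \<sigma>. eigdec n (gram d n S) U \<sigma> \<longrightarrow> (\<forall>r>0.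
         integrable (rad_measure (unif_sphere d) n) (rad_sup n (loc_class d n S U (m_sum d k0) Bh w fs r)) \<and>
         rademacher (unif_sphere d) n (loc_class d n S U (m_sum d k0) Bh w fs r)
           \<le> sqrt (ln (2 / \<delta>)) * (0 * real d ^ k0 / real n) + sqrt (r * real (m_sum d k0) / real n) + 2 * w))"
    by (intro bexI[of _ "space ?M"]) auto
qed

end
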